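(* For every function $u:\Omega\to\mathbb R$ depending on only finitely many coordinates, every complex Borel measure $\mu$ on $\Omega$ with $\mathrm{Var}\,\mu<\infty$, and every $\mathbf p\in\mathbb Z^d$, \[\mathrm{Var}_{\mathbf p}(u\mu)\le\sup|u|\;\mathrm{Var}_{\mathbf p}(\mu)+\mathrm{Lip}_{\mathbf p}(u)\,|\mu|.\]
   Context: $I=[0,1]$, $\Omega=I^{\mathbb Z^d}$ with the product topology. For a complex Borel measure $\mu$ on $\Omega$: $\mathrm{Var}_{\mathbf p}\mu=\sup|\mu(\partial_{\mathbf p}\varphi)|$ over functions $\varphi$ depending on finitely many coordinates, $C^1$ in $x_{\mathbf p}$, with $\sup|\varphi|\le1$; $\mathrm{Var}\,\mu=\sup_{\mathbf p}\mathrm{Var}_{\mathbf p}\mu$; $|\mu|=\sup\{|\mu(\varphi)|:\ \sup|\varphi|\le1\}$ is the total variation norm; $u\mu$ is the measure with density $u$ w.r.t. $\mu$. For $u:\Omega\to\mathbb R$, $\mathrm{Lip}_{\mathbf p}(u)=\sup_{\mathbf x\in I^{\mathbb Z^d\setminus\{\mathbf p\}}}\sup_{x_{\mathbf p}\ne x'_{\mathbf p}\in I}\frac{u(x_{\mathbf p},\mathbf x)-u(x'_{\mathbf p},\mathbf x)}{|x_{\mathbf p}-x'_{\mathbf p}|}$. *)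

theory Defs
  imports "HOL-Analysis.Analysis"
begin

text \<open>Lattice sites: Z^d is modelled as int^'d ('d a finite index type, d = CARD('d)).
  Configurations: functions (int^'d) => real; Omega = I^(Z^d), I = [0,1], with the
  product topology (the function-space topology of HOL-Analysis, restricted to Omega).\<close>

type_synonym ('d) config = "(int^('d::finite)) \<Rightarrow> real"

definition Omega :: "'d config set" where
  "Omega = {x. \<forall>q. x q \<in> {0..1}}"

definition OmegaB :: "'d config measure" where
  "OmegaB = restrict_space borel Omega"

text \<open>A complex Borel measure mu on Omega, represented via its Jordan decomposition
  mu = (m1 - m2) + i (m3 - m4) with m1..m4 finite Borel measures on Omega.\<close>
type_synonym 'd cmeasure = "'d config measure \<times> 'd config measure \<times> 'd config measure \<times> 'd config measure"

definition is_cborel :: "'d cmeasure \<Rightarrow> bool" where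
  "is_cborel \<mu> = (case \<mu> of (m1, m2, m3, m4) \<Rightarrow>
     (\<forall>m\<in>{m1, m2, m3, m4}. finite_measure m \<and> sets m = sets OmegaB))"

definition cint :: "'d cmeasure \<Rightarrow> ('d config \<Rightarrow> complex) \<Rightarrow> complex" where
  "cint \<mu> \<phi> = (case \<mu> of (m1, m2, m3, m4) \<Rightarrow>
     (integral\<^sup>L m1 \<phi> - integral\<^sup>L m2 \<phi>) + \<i> * (integral\<^sup>L m3 \<phi> - integral\<^sup>L m4 \<phi>))"

definition depends_finitely :: "('d config \<Rightarrow> 'b) \<Rightarrow> bool" where
  "depends_finitely f = (\<exists>F. finite F \<and>
     (\<forall>x\<in>Omega. \<forall>y\<in>Omega. (\<forall>q\<in>F. x q = y q) \<longrightarrow> f x = f y))"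

definition pderiv_at :: "int^'d \<Rightarrow> ('d config \<Rightarrow> complex) \<Rightarrow> 'd config \<Rightarrow> complex" where
  "pderiv_at p \<phi> x = vector_derivative (\<lambda>s. \<phi> (x(p := s))) (at (x p) within {0..1})"

definition test_fun :: "int^'d \<Rightarrow> ('d config \<Rightarrow> complex) \<Rightarrow> bool" where
  "test_fun p \<phi> = (depends_finitely \<phi> \<and> continuous_on Omega \<phi> \<and>
     (\<forall>x\<in>Omega. ((\<lambda>s. \<phi> (x(p := s))) has_vector_derivative pderiv_at p \<phi> x)
                   (at (x p) within {0..1})) \<and>
     continuous_on Omega (pderiv_at p \<phi>) \<and>
     (\<forall>x\<in>Omega. cmod (\<phi> x) \<le> 1))"

text \<open>Var_p of a measure given by its integration functional L (L phi = mu(phi)).\<close>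
definition VarP :: "int^'d \<Rightarrow> (('d config \<Rightarrow> complex) \<Rightarrow> complex) \<Rightarrow> ereal" where
  "VarP p L = (SUP \<phi>\<in>{\<phi>. test_fun p \<phi>}. ereal (cmod (L (pderiv_at p \<phi>))))"

definition VarT :: "((('d::finite) config \<Rightarrow> complex) \<Rightarrow> complex) \<Rightarrow> ereal" where
  "VarT L = (SUP p::int^'d. VarP p L)"

definition tvnorm :: "'d cmeasure \<Rightarrow> ereal" where
  "tvnorm \<mu> = (SUP \<phi>\<in>{\<phi>. \<phi> \<in> borel_measurable OmegaB \<and> (\<forall>x\<in>Omega. cmod (\<phi> x) \<le> 1)}.
                 ereal (cmod (cint \<mu> \<phi>)))"

definition dens :: "('d config \<Rightarrow> real) \<Rightarrow> 'd cmeasure \<Rightarrow> ('d config \<Rightarrow> complex) \<Rightarrow> complex" where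
  "dens u \<mu> \<phi> = cint \<mu> (\<lambda>x. complex_of_real (u x) * \<phi> x)"

definition LipP :: "int^'d \<Rightarrow> ('d config \<Rightarrow> real) \<Rightarrow> ereal" where
  "LipP p u = (SUP (x, t, t')\<in>{(x, t, t'). x \<in> Omega \<and> t \<in> {0..1} \<and> t' \<in> {0..1} \<and> t \<noteq> t'}.
      ereal ((u (x(p := t)) - u (x(p := t'))) / \<bar>t - t'\<bar>))"

definition supabs :: "('d config \<Rightarrow> real) \<Rightarrow> real" where
  "supabs u = (SUP x\<in>Omega. \<bar>u x\<bar>)"

end

theory Submission
  imports Defs
begin

text \<open>For a test function \<open>\<phi>\<close>, if \<open>u\<close> were \<open>C\<^sup>1\<close> in \<open>x\<^sub>p\<close> the product rule would give
  \<open>\<mu>(u \<partial>\<^sub>p\<phi>) = \<mu>(\<partial>\<^sub>p(u\<phi>)) - \<mu>((\<partial>\<^sub>pu) \<phi>)\<close>, and the two terms are bounded by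
  \<open>sup \<bar>u\<bar> Var\<^sub>p \<mu>\<close> and \<open>Lip\<^sub>p(u) \<bar>\<mu>\<bar>\<close>. In general \<open>u\<close> is replaced by a function \<open>W\<close> that is \<open>C\<^sup>1\<close> in \<open>x\<^sub>p\<close>,
  with \<open>\<bar>W\<bar> \<le> sup \<bar>u\<bar>\<close> and \<open>\<bar>\<partial>\<^sub>pW\<bar> \<le> Lip\<^sub>p(u)\<close>, and \<open>L\<^sup>1\<close>-close to \<open>u\<close> for the four measures of the
  Jordan decomposition of \<open>\<mu>\<close>; the error \<open>\<mu>((u - W) \<partial>\<^sub>p\<phi>)\<close> is then arbitrarily small.

  \<open>W\<close> is built by sampling \<open>u\<close> at \<open>x\<^sub>p = j / N\<close>, replacing each sample by a continuous function of
  the other coordinates (continuous functions are dense in \<open>L\<^sup>1\<close> of finite Borel measures on a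
  Polish space), clamping these so that consecutive ones differ by at most \<open>Lip\<^sub>p(u) / N\<close>, and
  interpolating in \<open>x\<^sub>p\<close> by Bernstein polynomials, whose derivative is then at most \<open>Lip\<^sub>p(u)\<close>.\<close>

section \<open>Continuous functions are dense in \<open>L\<^sup>1\<close>\<close>

definition L1_approximable :: "'a::topological_space measure set \<Rightarrow> ('a \<Rightarrow> real) \<Rightarrow> bool" where
  "L1_approximable Ms h \<longleftrightarrow>
     (\<forall>e>0. \<exists>g. continuous_on UNIV g \<and> (\<forall>M\<in>Ms. (\<integral>\<^sup>+x. ennreal \<bar>g x - h x\<bar> \<partial>M) < ennreal e))"

lemma nn_integral_abs_le_add:
  fixes f g h :: "'a \<Rightarrow> real"
  assumes "f \<in> borel_measurable M" "g \<in> borel_measurable M"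
    and "\<And>x. x \<in> space M \<Longrightarrow> \<bar>h x\<bar> \<le> \<bar>f x\<bar> + \<bar>g x\<bar>"
  shows "(\<integral>\<^sup>+x. ennreal \<bar>h x\<bar> \<partial>M) \<le> (\<integral>\<^sup>+x. ennreal \<bar>f x\<bar> \<partial>M) + (\<integral>\<^sup>+x. ennreal \<bar>g x\<bar> \<partial>M)"
proof -
  have "(\<integral>\<^sup>+x. ennreal \<bar>h x\<bar> \<partial>M) \<le> (\<integral>\<^sup>+x. ennreal \<bar>f x\<bar> + ennreal \<bar>g x\<bar> \<partial>M)"
    using assms(3) by (intro nn_integral_mono) (simp flip: ennreal_plus)
  also have "\<dots> = (\<integral>\<^sup>+x. ennreal \<bar>f x\<bar> \<partial>M) + (\<integral>\<^sup>+x. ennreal \<bar>g x\<bar> \<partial>M)"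
    using assms(1,2) by (intro nn_integral_add) auto
  finally show ?thesis .
qed

lemma L1_approximable_continuous: "continuous_on UNIV g \<Longrightarrow> L1_approximable Ms g"
  unfolding L1_approximable_def by auto

lemma L1_approximable_add:
  assumes sets: "\<And>M. M \<in> Ms \<Longrightarrow> sets M = sets borel"
    and [measurable]: "u \<in> borel_measurable borel" "v \<in> borel_measurable borel"
    and u: "L1_approximable Ms u" and v: "L1_approximable Ms v"
  shows "L1_approximable Ms (\<lambda>x. u x + v x)"
  unfolding L1_approximable_def
proof (intro allI impI)
  fix e :: real assume "e > 0"
  then obtain g1 g2 where g: "continuous_on UNIV g1" "continuous_on UNIV g2"
    and err: "\<And>M. M \<in> Ms \<Longrightarrow> (\<integral>\<^sup>+x. ennreal \<bar>g1 x - u x\<bar> \<partial>M) < ennreal (e/2)"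
             "\<And>M. M \<in> Ms \<Longrightarrow> (\<integral>\<^sup>+x. ennreal \<bar>g2 x - v x\<bar> \<partial>M) < ennreal (e/2)"
    using u v unfolding L1_approximable_def by (meson half_gt_zero)
  have [measurable]: "g1 \<in> borel_measurable borel" "g2 \<in> borel_measurable borel"
    using g by (auto intro: borel_measurable_continuous_onI)
  show "\<exists>g. continuous_on UNIV g \<and>
      (\<forall>M\<in>Ms. (\<integral>\<^sup>+x. ennreal \<bar>g x - (u x + v x)\<bar> \<partial>M) < ennreal e)"
  proof (intro exI conjI ballI)
    show "continuous_on UNIV (\<lambda>x. g1 x + g2 x)" using g by (intro continuous_intros)
    fix M assume M: "M \<in> Ms"
    note meas = measurable_cong_sets[OF sets[OF M] refl]
    have "(\<integral>\<^sup>+x. ennreal \<bar>g1 x + g2 x - (u x + v x)\<bar> \<partial>M)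
        \<le> (\<integral>\<^sup>+x. ennreal \<bar>g1 x - u x\<bar> \<partial>M) + (\<integral>\<^sup>+x. ennreal \<bar>g2 x - v x\<bar> \<partial>M)"
      by (rule nn_integral_abs_le_add) (auto simp: meas)
    also have "\<dots> < ennreal (e/2) + ennreal (e/2)" using err M by (intro add_strict_mono)
    also have "\<dots> = ennreal e" using \<open>e > 0\<close> by (simp flip: ennreal_plus)
    finally show "(\<integral>\<^sup>+x. ennreal \<bar>g1 x + g2 x - (u x + v x)\<bar> \<partial>M) < ennreal e" .
  qed
qed

lemma L1_approximable_scale:
  assumes sets: "\<And>M. M \<in> Ms \<Longrightarrow> sets M = sets borel"
    and [measurable]: "u \<in> borel_measurable borel" and u: "L1_approximable Ms u"
  shows "L1_approximable Ms (\<lambda>x. c * u x)"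
proof (cases "c = 0")
  case True
  then show ?thesis by (simp add: L1_approximable_continuous)
next
  case False
  show ?thesis
    unfolding L1_approximable_def
  proof (intro allI impI)
    fix e :: real assume "e > 0"
    then obtain g where g: "continuous_on UNIV g"
      and err: "\<And>M. M \<in> Ms \<Longrightarrow> (\<integral>\<^sup>+x. ennreal \<bar>g x - u x\<bar> \<partial>M) < ennreal (e / \<bar>c\<bar>)"
      using u False unfolding L1_approximable_def by (meson divide_pos_pos zero_less_abs_iff)
    have [measurable]: "g \<in> borel_measurable borel" using g by (rule borel_measurable_continuous_onI)
    show "\<exists>g. continuous_on UNIV g \<and>
        (\<forall>M\<in>Ms. (\<integral>\<^sup>+x. ennreal \<bar>g x - c * u x\<bar> \<partial>M) < ennreal e)"
    proof (intro exI conjI ballI)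
      show "continuous_on UNIV (\<lambda>x. c * g x)" using g by (intro continuous_intros)
      fix M assume M: "M \<in> Ms"
      have "(\<integral>\<^sup>+x. ennreal \<bar>c * g x - c * u x\<bar> \<partial>M) = ennreal \<bar>c\<bar> * (\<integral>\<^sup>+x. ennreal \<bar>g x - u x\<bar> \<partial>M)"
        by (subst nn_integral_cmult[symmetric])
           (auto simp: measurable_cong_sets[OF sets[OF M] refl] abs_mult right_diff_distrib[symmetric]
                 ennreal_mult)
      also have "\<dots> < ennreal \<bar>c\<bar> * ennreal (e / \<bar>c\<bar>)"
        using err[OF M] False by (intro ennreal_mult_strict_left_mono) auto
      also have "\<dots> = ennreal e" using False \<open>e > 0\<close> by (simp flip: ennreal_mult)
      finally show "(\<integral>\<^sup>+x. ennreal \<bar>c * g x - c * u x\<bar> \<partial>M) < ennreal e" .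
    qed
  qed
qed

lemma L1_approximable_dominated_limit:
  assumes Ms: "finite Ms" and sets: "\<And>M. M \<in> Ms \<Longrightarrow> sets M = sets borel"
    and [measurable]: "\<And>i. U i \<in> borel_measurable borel" "h \<in> borel_measurable borel"
    and lim: "\<And>x. (\<lambda>i. U i x) \<longlonglongrightarrow> h x"
    and dom: "\<And>i x. \<bar>U i x\<bar> \<le> w x" and w: "\<And>M. M \<in> Ms \<Longrightarrow> integrable M w"
    and U: "\<And>i. L1_approximable Ms (U i)"
  shows "L1_approximable Ms h"
  unfolding L1_approximable_def
proof (intro allI impI)
  fix e :: real assume "e > 0"
  have "(\<lambda>i. \<integral>\<^sup>+x. ennreal \<bar>h x - U i x\<bar> \<partial>M) \<longlonglongrightarrow> 0" if M: "M \<in> Ms" for M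
  proof -
    note meas = measurable_cong_sets[OF sets[OF M] refl]
    have "(\<lambda>i. \<integral>\<^sup>+x. norm (h x - U i x) \<partial>M) \<longlonglongrightarrow> 0"
    proof (rule nn_integral_dominated_convergence_norm)
      show "w \<in> borel_measurable M" using w[OF M] by auto
      have "(\<integral>\<^sup>+x. w x \<partial>M) \<le> (\<integral>\<^sup>+x. norm (w x) \<partial>M)" by (intro nn_integral_mono) simp
      also have "\<dots> < \<infinity>" using w[OF M] by (simp add: integrable_iff_bounded)
      finally show "(\<integral>\<^sup>+x. w x \<partial>M) < \<infinity>" .
    qed (use dom lim in \<open>auto simp: meas\<close>)
    then show ?thesis by simp
  qed
  then have "\<forall>\<^sub>F i in sequentially. \<forall>M\<in>Ms. (\<integral>\<^sup>+x. ennreal \<bar>h x - U i x\<bar> \<partial>M) < ennreal (e/2)"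
    using \<open>e > 0\<close> by (intro eventually_ball_finite[OF Ms] ballI order_tendstoD(2)) auto
  then obtain i where i: "\<And>M. M \<in> Ms \<Longrightarrow> (\<integral>\<^sup>+x. ennreal \<bar>h x - U i x\<bar> \<partial>M) < ennreal (e/2)"
    by (auto simp: eventually_sequentially)
  obtain g where g: "continuous_on UNIV g"
    and err: "\<And>M. M \<in> Ms \<Longrightarrow> (\<integral>\<^sup>+x. ennreal \<bar>g x - U i x\<bar> \<partial>M) < ennreal (e/2)"
    using U[of i] \<open>e > 0\<close> unfolding L1_approximable_def by (meson half_gt_zero)
  have [measurable]: "g \<in> borel_measurable borel" using g by (rule borel_measurable_continuous_onI)
  show "\<exists>g. continuous_on UNIV g \<and> (\<forall>M\<in>Ms. (\<integral>\<^sup>+x. ennreal \<bar>g x - h x\<bar> \<partial>M) < ennreal e)"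
  proof (intro exI conjI ballI)
    fix M assume M: "M \<in> Ms"
    have "(\<integral>\<^sup>+x. ennreal \<bar>g x - h x\<bar> \<partial>M)
        \<le> (\<integral>\<^sup>+x. ennreal \<bar>g x - U i x\<bar> \<partial>M) + (\<integral>\<^sup>+x. ennreal \<bar>h x - U i x\<bar> \<partial>M)"
      by (rule nn_integral_abs_le_add) (auto simp: measurable_cong_sets[OF sets[OF M] refl])
    also have "\<dots> < ennreal (e/2) + ennreal (e/2)" using err i M by (intro add_strict_mono)
    also have "\<dots> = ennreal e" using \<open>e > 0\<close> by (simp flip: ennreal_plus)
    finally show "(\<integral>\<^sup>+x. ennreal \<bar>g x - h x\<bar> \<partial>M) < ennreal e" .
  qed (rule g)
qed

lemma finite_measure_compact_open_approx:
  fixes M :: "'a::polish_space measure" and e :: real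
  assumes fin: "finite_measure M" and sets: "sets M = sets borel" and A: "A \<in> sets borel"
    and "e > 0"
  obtains K U where "compact K" "K \<subseteq> A" "open U" "A \<subseteq> U" "emeasure M (U - K) < e"
proof -
  interpret finite_measure M by (rule fin)
  have top: "emeasure M (space M) \<noteq> \<infinity>" by simp
  have AM: "A \<in> sets M" using A sets by simp
  obtain K where K: "compact K" "K \<subseteq> A" "measure M A - e/2 < measure M K"
  proof (cases "measure M A - e/2 < 0")
    case True
    then show ?thesis using that[of "{}"] by auto
  next
    case False
    then have "ennreal (measure M A - e/2) < ennreal (measure M A)"
      using \<open>e > 0\<close> by (simp add: ennreal_less_iff)
    also have "\<dots> = (SUP K \<in> {K. K \<subseteq> A \<and> compact K}. emeasure M K)"
      unfolding inner_regular[OF sets top A, symmetric] using AM by (simp add: emeasure_eq_measure)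
    finally obtain K where "K \<subseteq> A" "compact K" "ennreal (measure M A - e/2) < emeasure M K"
      unfolding less_SUP_iff by blast
    moreover have "K \<in> sets M" using \<open>compact K\<close> sets by (simp add: compact_imp_closed borel_closed)
    ultimately show ?thesis using that False by (simp add: emeasure_eq_measure ennreal_less_iff)
  qed
  have "(INF U \<in> {U. A \<subseteq> U \<and> open U}. emeasure M U) = ennreal (measure M A)"
    unfolding outer_regular[OF sets top A, symmetric] using AM by (simp add: emeasure_eq_measure)
  also have "\<dots> < ennreal (measure M A + e/2)"
    using \<open>e > 0\<close> by (simp add: ennreal_less_iff)
  finally obtain U where U: "A \<subseteq> U" "open U" "emeasure M U < ennreal (measure M A + e/2)"
    unfolding INF_less_iff by blast
  have UM: "U \<in> sets M" and KM: "K \<in> sets M"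
    using U K sets by (auto simp: borel_open compact_imp_closed borel_closed)
  have "measure M U < measure M A + e/2"
    using U(3) UM by (simp add: emeasure_eq_measure ennreal_less_iff)
  then have "measure M (U - K) < e"
    using K U UM KM by (subst finite_measure_Diff) auto
  then have "emeasure M (U - K) < e"
    using UM KM by (simp add: emeasure_eq_measure ennreal_less_iff)
  then show ?thesis using that K U by blast
qed

text \<open>A single Urysohn function serves all measures: it vanishes outside \<open>\<Inter>\<^sub>M U\<^sub>M\<close> and is \<open>1\<close> on \<open>\<Union>\<^sub>M K\<^sub>M\<close>.\<close>
lemma L1_approximable_indicator:
  fixes Ms :: "'a::polish_space measure set"
  assumes Ms: "finite Ms" "\<And>M. M \<in> Ms \<Longrightarrow> finite_measure M \<and> sets M = sets borel"
    and A[measurable]: "A \<in> sets borel"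
  shows "L1_approximable Ms (indicator A)"
  unfolding L1_approximable_def
proof (intro allI impI)
  fix e :: real assume "e > 0"
  have "\<forall>M\<in>Ms. \<exists>K U. compact K \<and> K \<subseteq> A \<and> open U \<and> A \<subseteq> U \<and> emeasure M (U - K) < e"
    using Ms(2) A \<open>e > 0\<close> by (metis finite_measure_compact_open_approx)
  then obtain K U where KU: "\<And>M. M \<in> Ms \<Longrightarrow>
      compact (K M) \<and> K M \<subseteq> A \<and> open (U M) \<and> A \<subseteq> U M \<and> emeasure M (U M - K M) < e"
    by metis
  define KK where "KK = (\<Union>M\<in>Ms. K M)"
  define UU where "UU = (\<Inter>M\<in>Ms. U M)"
  have "closed KK" unfolding KK_def using KU Ms(1) by (intro compact_imp_closed compact_UN) auto
  moreover have "closed (- UU)" unfolding UU_def using KU Ms(1) by (intro closed_Compl open_INT) auto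
  moreover have "disjnt (- UU) KK"
  proof -
    have "KK \<subseteq> A" "A \<subseteq> UU" using KU unfolding KK_def UU_def by auto
    then show ?thesis by (auto simp: disjnt_def)
  qed
  ultimately obtain f where f: "continuous_map euclidean (top_of_set {0..1::real}) f"
      "f ` (- UU) \<subseteq> {0}" "f ` KK \<subseteq> {1}"
    using Urysohn_lemma[of euclidean "- UU" KK 0 1]
    by (auto simp: metrizable_imp_normal_space metrizable_space_euclidean closed_closedin[symmetric])
  have fc: "continuous_on UNIV f" and f01: "\<And>x. f x \<in> {0..1}"
    using f(1) unfolding continuous_map_in_subtopology by auto
  show "\<exists>g. continuous_on UNIV g \<and> (\<forall>M\<in>Ms. (\<integral>\<^sup>+x. ennreal \<bar>g x - indicator A x\<bar> \<partial>M) < ennreal e)"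
  proof (intro exI conjI ballI)
    fix M assume M: "M \<in> Ms"
    have sets: "sets M = sets borel" using Ms(2)[OF M] by simp
    have D: "U M - K M \<in> sets M"
      using KU[OF M] sets by (auto intro: borel_open borel_closed compact_imp_closed)
    have pw: "\<bar>f x - indicator A x\<bar> \<le> indicator (U M - K M) x" for x
      using f(2,3) f01[of x] KU[OF M] M unfolding KK_def UU_def by (auto simp: indicator_def image_subset_iff)
    have "(\<integral>\<^sup>+x. ennreal \<bar>f x - indicator A x\<bar> \<partial>M) \<le> (\<integral>\<^sup>+x. indicator (U M - K M) x \<partial>M)"
      by (intro nn_integral_mono) (metis ennreal_indicator ennreal_leI pw)
    also have "\<dots> < ennreal e" using KU[OF M] D by simp
    finally show "(\<integral>\<^sup>+x. ennreal \<bar>f x - indicator A x\<bar> \<partial>M) < ennreal e" .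
  qed (rule fc)
qed

lemma L1_approximable_nonneg:
  fixes Ms :: "'a::polish_space measure set"
  assumes Ms: "finite Ms" "\<And>M. M \<in> Ms \<Longrightarrow> finite_measure M \<and> sets M = sets borel"
    and "h \<in> borel_measurable borel" "\<And>x. 0 \<le> h x"
  shows "(\<forall>M\<in>Ms. integrable M h) \<longrightarrow> L1_approximable Ms h"
proof -
  have sets: "\<And>M. M \<in> Ms \<Longrightarrow> sets M = sets borel" using Ms(2) by blast
  show ?thesis
    using assms(3,4)
  proof (induction h rule: borel_measurable_induct_real)
    case (set A)
    then show ?case using L1_approximable_indicator[OF Ms] by simp
  next
    case (mult u c)
    then show ?case
      by (cases "c = 0") (auto intro: L1_approximable_scale[OF sets] L1_approximable_continuous)
  next
    case (add u v)
    have "integrable M u \<and> integrable M v" if "integrable M (\<lambda>x. v x + u x)" "M \<in> Ms" for M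
      using that add.hyps sets
      by (auto intro!: Bochner_Integration.integrable_bound[OF that(1)] simp: measurable_cong_sets[OF sets refl])
    then show ?case using add by (auto intro: L1_approximable_add[OF sets])
  next
    case (seq U)
    have le: "U i x \<le> h x" for i x
      using seq.hyps(3) by (intro incseq_le[OF _ seq.hyps(4)]) (auto simp: incseq_def le_fun_def)
    show ?case
    proof
      assume int: "\<forall>M\<in>Ms. integrable M h"
      have "integrable M (U i)" if M: "M \<in> Ms" for M i
      proof (rule Bochner_Integration.integrable_bound[of M h])
        show "integrable M h" using int M by blast
        show "U i \<in> borel_measurable M"
          using seq.hyps(1) by (simp add: measurable_cong_sets[OF sets[OF M] refl])
        show "AE x in M. norm (U i x) \<le> norm (h x)"
          using le seq.hyps(2) by (intro AE_I2) (metis abs_of_nonneg order.trans real_norm_def)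
      qed
      then show "L1_approximable Ms h"
        using seq.IH
        by (intro L1_approximable_dominated_limit[OF Ms(1) sets seq.hyps(1) assms(3) seq.hyps(4), of h])
           (use int le seq.hyps(2) in auto)
    qed
  qed
qed

theorem L1_approximable_integrable:
  fixes Ms :: "'a::polish_space measure set"
  assumes Ms: "finite Ms" "\<And>M. M \<in> Ms \<Longrightarrow> finite_measure M \<and> sets M = sets borel"
    and h[measurable]: "h \<in> borel_measurable borel" and int: "\<And>M. M \<in> Ms \<Longrightarrow> integrable M h"
  shows "L1_approximable Ms h"
proof -
  have sets: "\<And>M. M \<in> Ms \<Longrightarrow> sets M = sets borel" using Ms(2) by blast
  have pos: "L1_approximable Ms (\<lambda>x. max (h x) 0)" and neg: "L1_approximable Ms (\<lambda>x. max (- h x) 0)"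
    using int by (auto intro!: L1_approximable_nonneg[OF Ms, rule_format] integrable_max)
  have "L1_approximable Ms (\<lambda>x. max (h x) 0 + (-1) * max (- h x) 0)"
    by (intro L1_approximable_add[OF sets] L1_approximable_scale[OF sets] pos neg) auto
  moreover have "(\<lambda>x. max (h x) 0 + (-1) * max (- h x) 0) = h" by (auto simp: fun_eq_iff max_def)
  ultimately show ?thesis by simp
qed

section \<open>Bernstein polynomials and clamped walks\<close>

lemma has_real_derivative_Bernstein_Suc:
  assumes "k \<le> Suc n"
  shows "(Bernstein (Suc n) k has_real_derivative
          real (Suc n) * ((if k = 0 then 0 else Bernstein n (k - 1) t) - Bernstein n k t)) (at t)"
proof (cases k)
  case 0
  have "((\<lambda>t. (1 - t) ^ Suc n) has_real_derivative real (Suc n) * (1 - t) ^ n * (0 - 1)) (at t)"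
    by (intro derivative_eq_intros) auto
  moreover have "Bernstein (Suc n) 0 = (\<lambda>t. (1 - t) ^ Suc n)" by (simp add: Bernstein_def fun_eq_iff)
  ultimately show ?thesis using 0 by (simp add: Bernstein_def)
next
  case (Suc j)
  then have j: "j \<le> n" using assms by simp
  define m where "m = n - j"
  define C where "C = real (Suc n choose Suc j)"
  have b1: "C * real (Suc j) = real (Suc n) * real (n choose j)"
    unfolding C_def using Suc_times_binomial_eq[of n j] by (metis of_nat_mult)
  have b2: "C * real m = real (Suc n) * real (n choose Suc j)"
    unfolding C_def m_def using binomial_absorb_comp[of "Suc n" "Suc j"]
    by (metis diff_Suc_Suc diff_Suc_1 of_nat_mult mult.commute)
  have e1: "Bernstein (Suc n) k = (\<lambda>t. C * (t ^ Suc j * (1 - t) ^ m))"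
    using Suc by (auto simp: Bernstein_def C_def m_def fun_eq_iff)
  have "((\<lambda>t. C * (t ^ Suc j * (1 - t) ^ m)) has_real_derivative
        C * (real (Suc j) * t ^ j * (1 - t) ^ m - real m * (1 - t) ^ (m - 1) * t ^ Suc j)) (at t)"
    by (rule derivative_eq_intros refl | simp)+
  also have "C * (real (Suc j) * t ^ j * (1 - t) ^ m - real m * (1 - t) ^ (m - 1) * t ^ Suc j)
      = (C * real (Suc j)) * (t ^ j * (1 - t) ^ m) - (C * real m) * (t ^ Suc j * (1 - t) ^ (m - 1))"
    by (simp add: algebra_simps)
  also have "\<dots> = real (Suc n) * (real (n choose j) * t ^ j * (1 - t) ^ (n - j)
      - real (n choose Suc j) * t ^ Suc j * (1 - t) ^ (n - Suc j))"
    unfolding b1 b2 by (simp add: m_def algebra_simps)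
  also have "\<dots> = real (Suc n) * ((if k = 0 then 0 else Bernstein n (k - 1) t) - Bernstein n k t)"
    using Suc by (simp add: Bernstein_def)
  finally show ?thesis unfolding e1 .
qed

lemma has_real_derivative_Bernstein_sum:
  "((\<lambda>t. \<Sum>k\<le>Suc n. c k * Bernstein (Suc n) k t) has_real_derivative
     real (Suc n) * (\<Sum>k\<le>n. (c (Suc k) - c k) * Bernstein n k t)) (at t)"
proof -
  have "((\<lambda>t. \<Sum>k\<le>Suc n. c k * Bernstein (Suc n) k t) has_real_derivative
      (\<Sum>k\<le>Suc n. c k * (real (Suc n) * ((if k = 0 then 0 else Bernstein n (k - 1) t) - Bernstein n k t))))
      (at t)"
    by (intro DERIV_sum DERIV_cmult has_real_derivative_Bernstein_Suc) auto
  also have "(\<Sum>k\<le>Suc n. c k * (real (Suc n) * ((if k = 0 then 0 else Bernstein n (k - 1) t) - Bernstein n k t)))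
      = real (Suc n) * ((\<Sum>k\<le>n. c (Suc k) * Bernstein n k t) - (\<Sum>k\<le>Suc n. c k * Bernstein n k t))"
    by (simp add: sum_distrib_left sum_subtractf algebra_simps sum.atMost_Suc_shift del: sum.atMost_Suc)
  also have "(\<Sum>k\<le>Suc n. c k * Bernstein n k t) = (\<Sum>k\<le>n. c k * Bernstein n k t)"
    by (simp add: Bernstein_def)
  finally show ?thesis by (simp add: sum_subtractf left_diff_distrib)
qed

lemma sum_Bernstein_sq_dist:
  assumes "N > 0"
  shows "(\<Sum>k\<le>N. (real k / N - t)\<^sup>2 * Bernstein N k t) = t * (1 - t) / N"
proof -
  have "(real k / N - t)\<^sup>2 * Bernstein N k t = (real k * (real k - 1) * Bernstein N k t) / N^2
      + (real k * Bernstein N k t) / N^2 - (2 * t / N) * (real k * Bernstein N k t) + t^2 * Bernstein N k t"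
    for k using assms by (simp add: power2_eq_square field_simps)
  then have "(\<Sum>k\<le>N. (real k / N - t)\<^sup>2 * Bernstein N k t)
      = (\<Sum>k\<le>N. real k * (real k - 1) * Bernstein N k t) / N^2 + (\<Sum>k\<le>N. real k * Bernstein N k t) / N^2
        - (2 * t / N) * (\<Sum>k\<le>N. real k * Bernstein N k t) + t^2 * (\<Sum>k\<le>N. Bernstein N k t)"
    by (simp only: sum.distrib sum_subtractf sum_divide_distrib[symmetric] sum_distrib_left[symmetric])
  also have "\<dots> = real N * (real N - 1) * t\<^sup>2 / N^2 + real N * t / N^2 - (2 * t / N) * (real N * t) + t^2"
    by (simp only: sum_kk_Bernstein sum_k_Bernstein sum_Bernstein mult_1_right)
  also have "\<dots> = t * (1 - t) / N"
    using assms by (simp add: power2_eq_square field_simps)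
  finally show ?thesis .
qed

lemma abs_sum_Bernstein_le:
  assumes "t \<in> {0..1}" and "\<And>k. k \<le> N \<Longrightarrow> \<bar>a k\<bar> \<le> S"
  shows "\<bar>\<Sum>k\<le>N. a k * Bernstein N k t\<bar> \<le> S"
proof -
  have "\<bar>\<Sum>k\<le>N. a k * Bernstein N k t\<bar> \<le> (\<Sum>k\<le>N. S * Bernstein N k t)"
    using assms Bernstein_nonneg[of t N]
    by (intro order.trans[OF sum_abs sum_mono]) (auto simp: abs_mult intro: mult_right_mono)
  then show ?thesis by (simp flip: sum_distrib_left)
qed

lemma abs_sum_Bernstein_sub_le:
  assumes N: "N > 0" and t: "t \<in> {0..1}" and \<delta>: "\<delta> > 0" "1 \<le> real N * \<delta>\<^sup>2" and L: "L \<ge> 0"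
    and a: "\<And>k. k \<le> N \<Longrightarrow> \<bar>a k - v\<bar> \<le> E + L * \<bar>real k / N - t\<bar>"
  shows "\<bar>(\<Sum>k\<le>N. a k * Bernstein N k t) - v\<bar> \<le> E + 2 * L * \<delta>"
proof -
  have B0: "0 \<le> Bernstein N k t" for k using Bernstein_nonneg t by auto
  \<comment> \<open>AM-GM: \<open>\<bar>y\<bar> \<le> \<delta> + y\<^sup>2 / \<delta>\<close>, and the Bernstein weights have variance \<open>t (1 - t) / N \<le> \<delta>\<^sup>2\<close>.\<close>
  have amgm: "\<bar>y\<bar> \<le> \<delta> + y\<^sup>2 / \<delta>" for y :: real
  proof (cases "\<bar>y\<bar> \<le> \<delta>")
    case False
    then have "\<delta> * \<bar>y\<bar> \<le> \<bar>y\<bar> * \<bar>y\<bar>" by (intro mult_right_mono) auto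
    then show ?thesis using \<delta> by (simp add: field_simps power2_eq_square add_increasing)
  qed (use \<delta> in \<open>auto intro: add_increasing2\<close>)
  have "\<bar>(\<Sum>k\<le>N. a k * Bernstein N k t) - v\<bar> = \<bar>\<Sum>k\<le>N. (a k - v) * Bernstein N k t\<bar>"
    by (simp add: sum_subtractf left_diff_distrib sum_distrib_left[symmetric])
  also have "\<dots> \<le> (\<Sum>k\<le>N. (E + L * \<delta> + (L / \<delta>) * (real k / N - t)\<^sup>2) * Bernstein N k t)"
  proof (intro order.trans[OF sum_abs sum_mono])
    fix k assume "k \<in> {..N}"
    then have "\<bar>a k - v\<bar> \<le> E + L * (\<delta> + (real k / N - t)\<^sup>2 / \<delta>)"
      using a[of k] amgm[of "real k / N - t"] L by (smt (verit) atMost_iff mult_left_mono)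
    then have "\<bar>a k - v\<bar> \<le> E + L * \<delta> + (L / \<delta>) * (real k / N - t)\<^sup>2"
      by (simp add: algebra_simps)
    then show "\<bar>(a k - v) * Bernstein N k t\<bar> \<le> (E + L * \<delta> + (L / \<delta>) * (real k / N - t)\<^sup>2) * Bernstein N k t"
      using B0[of k] by (simp add: abs_mult mult_right_mono)
  qed
  also have "\<dots> = (E + L * \<delta>) * (\<Sum>k\<le>N. Bernstein N k t)
      + (L / \<delta>) * (\<Sum>k\<le>N. (real k / N - t)\<^sup>2 * Bernstein N k t)"
    by (simp only: distrib_right sum.distrib mult.assoc sum_distrib_left)
  also have "\<dots> = E + L * \<delta> + (L / \<delta>) * (t * (1 - t) / N)"
    by (simp only: sum_Bernstein_sq_dist[OF N] sum_Bernstein mult_1_right)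
  also have "\<dots> \<le> E + 2 * L * \<delta>"
  proof -
    have "t * (1 - t) \<le> 1" using t by (smt (verit) atLeastAtMost_iff mult_le_one)
    then have "t * (1 - t) / N \<le> 1 / N" by (simp add: divide_right_mono)
    also have "\<dots> \<le> \<delta>\<^sup>2" using \<delta> N by (simp add: field_simps)
    finally have "(L / \<delta>) * (t * (1 - t) / N) \<le> (L / \<delta>) * \<delta>\<^sup>2"
      using L \<delta> by (intro mult_left_mono) auto
    then show ?thesis using \<delta> by (simp add: power2_eq_square)
  qed
  finally show ?thesis .
qed

fun clamp_walk :: "real \<Rightarrow> real \<Rightarrow> (nat \<Rightarrow> real) \<Rightarrow> nat \<Rightarrow> real" where
  "clamp_walk S d c 0 = max (- S) (min S (c 0))"
| "clamp_walk S d c (Suc k) =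
     max (max (- S) (clamp_walk S d c k - d)) (min (min S (clamp_walk S d c k + d)) (c (Suc k)))"

lemma abs_clamp_walk_le: "0 \<le> S \<Longrightarrow> 0 \<le> d \<Longrightarrow> \<bar>clamp_walk S d c k\<bar> \<le> S"
  by (induction k) auto

lemma abs_clamp_walk_step_le:
  "0 \<le> S \<Longrightarrow> 0 \<le> d \<Longrightarrow> \<bar>clamp_walk S d c (Suc k) - clamp_walk S d c k\<bar> \<le> d"
  using abs_clamp_walk_le[of S d c k] by auto

text \<open>Clamping to an interval is 1-Lipschitz, and the interval of step \<open>k + 1\<close> lies within
  \<open>\<bar>clamp_walk S d c k - h k\<bar>\<close> of \<open>h (k + 1)\<close>; so the errors against any admissible walk \<open>h\<close> add up.\<close>
lemma abs_clamp_walk_sub_le: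
  assumes "0 \<le> S" "0 \<le> d" and h: "\<And>j. \<bar>h j\<bar> \<le> S" "\<And>j. \<bar>h (Suc j) - h j\<bar> \<le> d"
  shows "\<bar>clamp_walk S d c k - h k\<bar> \<le> (\<Sum>j\<le>k. \<bar>c j - h j\<bar>)"
proof (induction k)
  case 0
  then show ?case using h(1)[of 0] by auto
next
  case (Suc k)
  define a where "a = clamp_walk S d c k"
  have "\<bar>a\<bar> \<le> S" unfolding a_def by (rule abs_clamp_walk_le[OF assms(1,2)])
  then have "\<bar>clamp_walk S d c (Suc k) - h (Suc k)\<bar> \<le> \<bar>a - h k\<bar> + \<bar>c (Suc k) - h (Suc k)\<bar>"
    using h(1)[of k] h(1)[of "Suc k"] h(2)[of k] assms(1,2)
    unfolding clamp_walk.simps a_def[symmetric] by (smt (verit))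
  then show ?case using Suc unfolding a_def by simp
qed

lemma continuous_on_clamp_walk:
  "(\<And>j. continuous_on A (c j)) \<Longrightarrow> continuous_on A (\<lambda>x. clamp_walk S d (\<lambda>j. c j x) k)"
  by (induction k) (auto intro!: continuous_intros)

lemma Bernstein_clamp_walk_approx:
  fixes f :: "real \<Rightarrow> real"
  assumes N: "N > 0" and \<delta>: "\<delta> > 0" "1 \<le> real N * \<delta>\<^sup>2" and L: "L \<ge> 0"
    and f_bound: "\<And>t. t \<in> {0..1} \<Longrightarrow> \<bar>f t\<bar> \<le> S"
    and f_lip: "\<And>t t'. t \<in> {0..1} \<Longrightarrow> t' \<in> {0..1} \<Longrightarrow> \<bar>f t - f t'\<bar> \<le> L * \<bar>t - t'\<bar>"
    and t: "t \<in> {0..1}"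
  shows "\<bar>(\<Sum>k\<le>N. clamp_walk S (L / N) c k * Bernstein N k t) - f t\<bar>
           \<le> (\<Sum>j\<le>N. \<bar>c j - f (j / N)\<bar>) + 2 * L * \<delta>"
proof -
  have S: "0 \<le> S" using f_bound[OF t] by simp
  have LN: "0 \<le> L / N" using L by simp
  define h where "h j = f (min 1 (real j / N))" for j
  have h_bound: "\<bar>h j\<bar> \<le> S" for j unfolding h_def by (rule f_bound) simp
  have h_step: "\<bar>h (Suc j) - h j\<bar> \<le> L / N" for j
  proof -
    have "\<bar>h (Suc j) - h j\<bar> \<le> L * \<bar>min 1 (real (Suc j) / N) - min 1 (real j / N)\<bar>"
      unfolding h_def by (intro f_lip) auto
    also have "\<dots> \<le> L * (1 / N)"
      using N L by (intro mult_left_mono) (auto simp: field_simps min_def)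
    finally show ?thesis by simp
  qed
  define E where "E = (\<Sum>j\<le>N. \<bar>c j - f (j / N)\<bar>)"
  have "\<bar>clamp_walk S (L / N) c k - f t\<bar> \<le> E + L * \<bar>real k / N - t\<bar>" if k: "k \<le> N" for k
  proof -
    have hk: "h k = f (k / N)" using k N unfolding h_def by simp
    have "\<bar>clamp_walk S (L / N) c k - h k\<bar> \<le> (\<Sum>j\<le>k. \<bar>c j - h j\<bar>)"
      by (rule abs_clamp_walk_sub_le[where h=h, OF S LN h_bound h_step])
    also have "\<dots> = (\<Sum>j\<le>k. \<bar>c j - f (j / N)\<bar>)"
      using k N by (intro sum.cong) (auto simp: h_def)
    also have "\<dots> \<le> E"
      unfolding E_def using k by (intro sum_mono2) auto
    finally have "\<bar>clamp_walk S (L / N) c k - h k\<bar> \<le> E" .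
    moreover have "\<bar>h k - f t\<bar> \<le> L * \<bar>real k / N - t\<bar>"
      unfolding hk using k N t by (intro f_lip) auto
    ultimately show ?thesis by linarith
  qed
  then show ?thesis
    unfolding E_def[symmetric] by (intro abs_sum_Bernstein_sub_le[OF N t \<delta> L])
qed

section \<open>The configuration space\<close>

lemma mem_Omega_iff: "x \<in> Omega \<longleftrightarrow> (\<forall>q. 0 \<le> x q \<and> x q \<le> 1)"
  by (simp add: Omega_def)

lemma zero_in_Omega: "(\<lambda>_. 0) \<in> Omega"
  by (simp add: Omega_def)

lemma fun_upd_in_Omega: "x \<in> Omega \<Longrightarrow> t \<in> {0..1} \<Longrightarrow> x(p := t) \<in> Omega"
  by (simp add: Omega_def)

lemma compact_Omega: "compact (Omega :: 'd::finite config set)"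
proof -
  have "Omega = PiE UNIV (\<lambda>_::int^'d. {0..1::real})"
    by (auto simp: Omega_def PiE_def Pi_def extensional_def)
  moreover have "compactin (product_topology (\<lambda>_. euclidean) UNIV) (PiE UNIV (\<lambda>_::int^'d. {0..1::real}))"
    by (subst compactin_PiE) auto
  ultimately show ?thesis by (simp add: euclidean_product_topology)
qed

lemma bounded_image_Omega_if_continuous:
  "continuous_on Omega f \<Longrightarrow> bounded (f ` (Omega :: 'd::finite config set))"
  by (intro compact_imp_bounded compact_continuous_image compact_Omega)

lemma space_OmegaB: "space OmegaB = Omega"
  by (simp add: OmegaB_def space_restrict_space)

lemma sets_eq_OmegaB_imp_space: "sets m = sets OmegaB \<Longrightarrow> space m = Omega"
  using sets_eq_imp_space_eq space_OmegaB by metis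

lemma continuous_on_Omega_imp_measurable:
  "continuous_on Omega f \<Longrightarrow> (f :: 'd::finite config \<Rightarrow> 'b::topological_space) \<in> borel_measurable OmegaB"
  unfolding OmegaB_def using compact_Omega
  by (intro borel_measurable_continuous_on_restrict) (auto intro: borel_closed compact_imp_closed)

lemma continuous_into_Omega_imp_measurable:
  "continuous_on UNIV g \<Longrightarrow> range g \<subseteq> Omega \<Longrightarrow> g \<in> measurable borel (OmegaB :: 'd::finite config measure)"
  unfolding OmegaB_def
  by (rule measurable_restrict_space2) (auto intro: borel_measurable_continuous_onI)

lemma continuous_on_coordinate: "continuous_on A (\<lambda>x::'d::finite config. x q)"
  by (rule continuous_on_subset[OF continuous_on_product_coordinates]) auto

lemma continuous_on_fun_upd: "continuous_on A (\<lambda>x::'d::finite config. x(p := t))"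
proof (rule continuous_on_coordinatewise_then_product)
  show "continuous_on A (\<lambda>x::'d config. (x(p := t)) q)" for q
    by (cases "q = p") (simp_all add: continuous_on_coordinate)
qed

lemma fun_upd_measurable_OmegaB:
  assumes "t \<in> {0..1}"
  shows "(\<lambda>x. x(p := t)) \<in> measurable OmegaB (OmegaB :: 'd::finite config measure)"
  unfolding OmegaB_def using assms
  by (intro measurable_restrict_space3 borel_measurable_continuous_onI continuous_on_fun_upd)
     (auto intro: fun_upd_in_Omega)

definition proj_coords :: "(int^'d::finite) set \<Rightarrow> 'd config \<Rightarrow> 'd config" where
  "proj_coords G x = (\<lambda>q. if q \<in> G then x q else 0)"

lemma proj_coords_in_Omega: "x \<in> Omega \<Longrightarrow> proj_coords G x \<in> Omega"
  by (auto simp: Omega_def proj_coords_def)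

lemma continuous_on_proj_coords: "continuous_on A (proj_coords G :: 'd::finite config \<Rightarrow> _)"
  unfolding proj_coords_def
proof (rule continuous_on_coordinatewise_then_product)
  show "continuous_on A (\<lambda>x::'d config. if q \<in> G then x q else 0)" for q
    by (cases "q \<in> G") (simp_all add: continuous_on_coordinate)
qed

lemma measurable_proj_coords:
  "sets m = sets OmegaB \<Longrightarrow> (proj_coords G :: 'd::finite config \<Rightarrow> _) \<in> borel_measurable m"
  using continuous_on_Omega_imp_measurable[OF continuous_on_proj_coords]
  by (subst measurable_cong_sets[of m OmegaB borel borel]) auto

definition clip_config :: "'d::finite config \<Rightarrow> 'd config" where
  "clip_config z = (\<lambda>q. max 0 (min 1 (z q)))"

lemma clip_config_in_Omega: "clip_config z \<in> Omega"
  by (auto simp: Omega_def clip_config_def)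

lemma clip_config_id: "x \<in> Omega \<Longrightarrow> clip_config x = x"
  by (auto simp: Omega_def clip_config_def fun_eq_iff)

lemma continuous_on_clip_config: "continuous_on A (clip_config :: 'd::finite config \<Rightarrow> _)"
  unfolding clip_config_def
  by (intro continuous_on_coordinatewise_then_product) (auto intro!: continuous_intros continuous_on_coordinate)

lemma depends_finitely_compose2:
  assumes "depends_finitely f" "depends_finitely g"
  shows "depends_finitely (\<lambda>x. F (f x) (g x))"
proof -
  obtain Ff where Ff: "finite Ff" "\<forall>x\<in>Omega. \<forall>y\<in>Omega. (\<forall>q\<in>Ff. x q = y q) \<longrightarrow> f x = f y"
    using assms(1) unfolding depends_finitely_def by blast
  obtain Fg where Fg: "finite Fg" "\<forall>x\<in>Omega. \<forall>y\<in>Omega. (\<forall>q\<in>Fg. x q = y q) \<longrightarrow> g x = g y"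
    using assms(2) unfolding depends_finitely_def by blast
  have "\<forall>x\<in>Omega. \<forall>y\<in>Omega. (\<forall>q\<in>Ff \<union> Fg. x q = y q) \<longrightarrow> F (f x) (g x) = F (f y) (g y)"
    using Ff(2) Fg(2) by (metis UnCI)
  then show ?thesis using Ff(1) Fg(1) unfolding depends_finitely_def by blast
qed

text \<open>On \<open>Omega\<close>, \<open>f = f \<circ> clip_config \<circ> proj_coords G\<close>; approximate \<open>f \<circ> clip_config\<close> in \<open>L\<^sup>1\<close> of the
  image measures under \<open>proj_coords G\<close>.\<close>
lemma L1_approx_by_continuous_of_coords:
  fixes f :: "'d::finite config \<Rightarrow> real" and e :: real
  assumes ms: "finite ms" "\<And>m. m \<in> ms \<Longrightarrow> finite_measure m \<and> sets m = sets OmegaB"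
    and f[measurable]: "f \<in> borel_measurable OmegaB" and f_bounded: "bounded (f ` Omega)"
    and f_coords: "\<And>x. x \<in> Omega \<Longrightarrow> f (proj_coords G x) = f x"
    and "e > 0"
  obtains g where "continuous_on UNIV g"
    "\<And>m. m \<in> ms \<Longrightarrow> (\<integral>\<^sup>+x. ennreal \<bar>g (proj_coords G x) - f x\<bar> \<partial>m) < ennreal e"
proof -
  let ?\<pi> = "proj_coords G :: 'd config \<Rightarrow> 'd config"
  define H where "H = f \<circ> clip_config"
  have "clip_config \<in> measurable borel (OmegaB :: 'd config measure)"
    by (rule continuous_into_Omega_imp_measurable[OF continuous_on_clip_config])
       (use clip_config_in_Omega in blast)
  then have H_meas: "H \<in> borel_measurable borel" unfolding H_def by (rule measurable_comp) (rule f)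
  obtain B where B: "\<And>x. x \<in> Omega \<Longrightarrow> \<bar>f x\<bar> \<le> B" using f_bounded by (auto simp: bounded_iff)
  have \<pi>_meas: "?\<pi> \<in> borel_measurable m" if "m \<in> ms" for m
    using ms(2)[OF that] by (intro measurable_proj_coords) simp
  define Ms where "Ms = (\<lambda>m. distr m borel ?\<pi>) ` ms"
  have Ms_fin: "finite Ms" using ms(1) by (simp add: Ms_def)
  have Ms_meas: "finite_measure M \<and> sets M = sets borel" if M: "M \<in> Ms" for M
  proof -
    obtain m where m: "m \<in> ms" "M = distr m borel ?\<pi>" using M by (auto simp: Ms_def)
    then show ?thesis
      using ms(2)[OF m(1)] \<pi>_meas[OF m(1)] by (auto intro: finite_measure.finite_measure_distr)
  qed
  have "integrable M H" if "M \<in> Ms" for M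
  proof (rule finite_measure.integrable_const_bound[where B=B])
    show "finite_measure M" using Ms_meas[OF that] by blast
    show "AE x in M. norm (H x) \<le> B" using B[OF clip_config_in_Omega] by (intro AE_I2) (simp add: H_def)
    show "H \<in> borel_measurable M"
      using H_meas Ms_meas[OF that] by (subst measurable_cong_sets[of M borel borel borel]) auto
  qed
  then obtain g where g: "continuous_on UNIV g"
    and err: "\<And>M. M \<in> Ms \<Longrightarrow> (\<integral>\<^sup>+z. ennreal \<bar>g z - H z\<bar> \<partial>M) < ennreal e"
    using L1_approximable_integrable[OF Ms_fin Ms_meas H_meas] \<open>e > 0\<close> unfolding L1_approximable_def by blast
  have "(\<integral>\<^sup>+x. ennreal \<bar>g (?\<pi> x) - f x\<bar> \<partial>m) < ennreal e" if m: "m \<in> ms" for m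
  proof -
    have "(\<integral>\<^sup>+x. ennreal \<bar>g (?\<pi> x) - f x\<bar> \<partial>m) = (\<integral>\<^sup>+x. ennreal \<bar>g (?\<pi> x) - H (?\<pi> x)\<bar> \<partial>m)"
      using ms(2)[OF m] f_coords[symmetric]
      by (intro nn_integral_cong) (simp add: H_def sets_eq_OmegaB_imp_space clip_config_id proj_coords_in_Omega)
    also have "\<dots> = (\<integral>\<^sup>+z. ennreal \<bar>g z - H z\<bar> \<partial>distr m borel ?\<pi>)"
      using borel_measurable_continuous_onI[OF g] H_meas by (intro nn_integral_distr[symmetric] \<pi>_meas[OF m]) simp
    also have "\<dots> < ennreal e" using m by (intro err) (simp add: Ms_def)
    finally show ?thesis .
  qed
  with g that show ?thesis by blast
qed

section \<open>Functions that are \<open>C\<^sup>1\<close> in one coordinate\<close>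

definition partially_C1 :: "int^'d::finite \<Rightarrow> ('d config \<Rightarrow> complex) \<Rightarrow> bool" where
  "partially_C1 p \<phi> \<longleftrightarrow> depends_finitely \<phi> \<and> continuous_on Omega \<phi> \<and>
     (\<forall>x\<in>Omega. ((\<lambda>s. \<phi> (x(p := s))) has_vector_derivative pderiv_at p \<phi> x) (at (x p) within {0..1})) \<and>
     continuous_on Omega (pderiv_at p \<phi>)"

lemma test_fun_iff: "test_fun p \<phi> \<longleftrightarrow> partially_C1 p \<phi> \<and> (\<forall>x\<in>Omega. cmod (\<phi> x) \<le> 1)"
  by (auto simp: test_fun_def partially_C1_def)

lemma pderiv_at_eqI:
  assumes "x \<in> Omega" and "((\<lambda>s. \<phi> (x(p := s))) has_vector_derivative D) (at (x p) within {0..1})"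
  shows "pderiv_at p \<phi> x = D"
  using assms vector_derivative_within_cbox[of 0 1 "x p" "\<lambda>s. \<phi> (x(p := s))" D]
  by (simp add: pderiv_at_def cbox_interval mem_Omega_iff)

lemma partially_C1I:
  assumes "depends_finitely \<phi>" "continuous_on Omega \<phi>" "continuous_on Omega \<phi>'"
    and "\<And>x. x \<in> Omega \<Longrightarrow> ((\<lambda>s. \<phi> (x(p := s))) has_vector_derivative \<phi>' x) (at (x p) within {0..1})"
  shows "partially_C1 p \<phi>"
proof -
  have "pderiv_at p \<phi> x = \<phi>' x" if "x \<in> Omega" for x using that assms(4)[OF that] by (rule pderiv_at_eqI)
  with assms show ?thesis unfolding partially_C1_def by (auto cong: continuous_on_cong)
qed

lemma partially_C1_has_vector_derivative:
  "partially_C1 p \<phi> \<Longrightarrow> x \<in> Omega \<Longrightarrow>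
     ((\<lambda>s. \<phi> (x(p := s))) has_vector_derivative pderiv_at p \<phi> x) (at (x p) within {0..1})"
  by (simp add: partially_C1_def)

lemma partially_C1_const: "partially_C1 p (\<lambda>_. c)"
  by (rule partially_C1I[where \<phi>'="\<lambda>_. 0"]) (auto simp: depends_finitely_def)

lemma pderiv_at_const: "x \<in> Omega \<Longrightarrow> pderiv_at p (\<lambda>_. c) x = 0"
  by (rule pderiv_at_eqI) auto

lemma
  assumes f: "partially_C1 p f" and g: "partially_C1 p g"
  shows partially_C1_mult: "partially_C1 p (\<lambda>x. f x * g x)"
    and pderiv_at_mult:
      "x \<in> Omega \<Longrightarrow> pderiv_at p (\<lambda>x. f x * g x) x = f x * pderiv_at p g x + pderiv_at p f x * g x"
proof -
  have D: "((\<lambda>s. f (x(p := s)) * g (x(p := s))) has_vector_derivative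
      f x * pderiv_at p g x + pderiv_at p f x * g x) (at (x p) within {0..1})" if "x \<in> Omega" for x
    using has_vector_derivative_mult[OF partially_C1_has_vector_derivative[OF f that]
        partially_C1_has_vector_derivative[OF g that]]
    by simp
  then show "x \<in> Omega \<Longrightarrow> pderiv_at p (\<lambda>x. f x * g x) x = f x * pderiv_at p g x + pderiv_at p f x * g x"
    by (blast intro: pderiv_at_eqI)
  show "partially_C1 p (\<lambda>x. f x * g x)"
  proof (rule partially_C1I[OF _ _ _ D])
    show "depends_finitely (\<lambda>x. f x * g x)"
      using f g by (simp add: partially_C1_def depends_finitely_compose2)
    show "continuous_on Omega (\<lambda>x. f x * g x)"
      using f g by (auto simp: partially_C1_def intro!: continuous_intros)
    show "continuous_on Omega (\<lambda>x. f x * pderiv_at p g x + pderiv_at p f x * g x)"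
      using f g by (auto simp: partially_C1_def intro!: continuous_intros)
  qed
qed

section \<open>Smoothing in one coordinate\<close>

definition bernstein_smoothing ::
    "real \<Rightarrow> real \<Rightarrow> nat \<Rightarrow> int^'d::finite \<Rightarrow> (nat \<Rightarrow> 'd config \<Rightarrow> real) \<Rightarrow> 'd config \<Rightarrow> real" where
  "bernstein_smoothing S L N p c x = (\<Sum>k\<le>N. clamp_walk S (L / N) (\<lambda>j. c j x) k * Bernstein N k (x p))"

lemma
  assumes N: "N > 0" and S: "0 \<le> S" and L: "0 \<le> L"
    and F: "finite F" "p \<notin> F" and c_F: "\<And>j x y. \<forall>q\<in>F. x q = y q \<Longrightarrow> c j x = c j y"
    and c_cont: "\<And>j. continuous_on UNIV (c j)"
  defines "W \<equiv> \<lambda>x. complex_of_real (bernstein_smoothing S L N p c x)"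
  shows partially_C1_bernstein_smoothing: "partially_C1 p W"
    and norm_bernstein_smoothing_le: "x \<in> Omega \<Longrightarrow> cmod (W x) \<le> S"
    and norm_pderiv_bernstein_smoothing_le: "x \<in> Omega \<Longrightarrow> cmod (pderiv_at p W x) \<le> L"
proof -
  obtain n where n: "N = Suc n" using N gr0_implies_Suc by blast
  define a where "a k x = clamp_walk S (L / N) (\<lambda>j. c j x) k" for k x
  define w' where "w' x = real N * (\<Sum>k\<le>n. (a (Suc k) x - a k x) * Bernstein n k (x p))" for x
  have a_cont: "continuous_on A (a k)" for A k
    unfolding a_def using c_cont by (intro continuous_on_clamp_walk) (auto intro: continuous_on_subset)
  have c_upd: "c j (x(p := s)) = c j x" for j x s
    using F(2) by (intro c_F) auto
  have a_upd: "a k (x(p := s)) = a k x" for k x s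
    by (simp only: a_def c_upd)
  have W_upd: "W (x(p := s)) = complex_of_real (\<Sum>k\<le>N. a k x * Bernstein N k s)" for x s
    unfolding W_def bernstein_smoothing_def a_def[symmetric] by (simp only: a_upd fun_upd_same)
  have deriv: "((\<lambda>s. W (x(p := s))) has_vector_derivative complex_of_real (w' x)) (at (x p) within {0..1})" for x
    unfolding W_upd w'_def n
    by (rule has_vector_derivative_of_real, rule has_field_derivative_at_within,
        rule has_real_derivative_Bernstein_sum)
  have x01: "x p \<in> {0..1}" if "x \<in> Omega" for x using that by (simp add: mem_Omega_iff)
  show "partially_C1 p W"
  proof (rule partially_C1I[OF _ _ _ deriv])
    have "\<forall>q\<in>insert p F. x q = y q \<Longrightarrow> W x = W y" for x y
      using c_F[of x y] by (simp add: W_def bernstein_smoothing_def)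
    then show "depends_finitely W" using F(1) unfolding depends_finitely_def by blast
    show "continuous_on Omega W" "continuous_on Omega (\<lambda>x. complex_of_real (w' x))"
      unfolding W_def w'_def bernstein_smoothing_def a_def[symmetric] Bernstein_def
      by (auto intro!: continuous_intros a_cont continuous_on_coordinate)
  qed
  assume x: "x \<in> Omega"
  show "cmod (W x) \<le> S"
    unfolding W_def bernstein_smoothing_def norm_of_real
    by (intro abs_sum_Bernstein_le[OF x01[OF x]] abs_clamp_walk_le S) (use L in simp)
  have "\<bar>\<Sum>k\<le>n. (a (Suc k) x - a k x) * Bernstein n k (x p)\<bar> \<le> L / N"
    unfolding a_def by (intro abs_sum_Bernstein_le[OF x01[OF x]] abs_clamp_walk_step_le S) (use L in simp)
  then have "\<bar>w' x\<bar> \<le> L" using N by (simp add: w'_def abs_mult field_simps)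
  then show "cmod (pderiv_at p W x) \<le> L" by (simp add: pderiv_at_eqI[OF x deriv])
qed

lemma nn_integral_bernstein_smoothing_sub_le:
  fixes u :: "'d::finite config \<Rightarrow> real"
  assumes sets_m: "sets m = sets OmegaB"
    and N: "N > 0" and \<delta>: "\<delta> > 0" "1 \<le> real N * \<delta>\<^sup>2" and L: "0 \<le> L"
    and u_meas: "u \<in> borel_measurable OmegaB" and c_meas: "\<And>j. c j \<in> borel_measurable OmegaB"
    and u_bound: "\<And>x. x \<in> Omega \<Longrightarrow> \<bar>u x\<bar> \<le> S"
    and u_lip: "\<And>x t t'. x \<in> Omega \<Longrightarrow> t \<in> {0..1} \<Longrightarrow> t' \<in> {0..1} \<Longrightarrow>
                  \<bar>u (x(p := t)) - u (x(p := t'))\<bar> \<le> L * \<bar>t - t'\<bar>"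
  shows "(\<integral>\<^sup>+x. ennreal \<bar>bernstein_smoothing S L N p c x - u x\<bar> \<partial>m)
           \<le> (\<Sum>j\<le>N. \<integral>\<^sup>+x. ennreal \<bar>c j x - u (x(p := j / N))\<bar> \<partial>m)
              + ennreal (2 * L * \<delta>) * emeasure m (space m)"
proof -
  have space_m: "space m = Omega" by (rule sets_eq_OmegaB_imp_space[OF sets_m])
  have slice_meas: "(\<lambda>x. ennreal \<bar>c j x - u (x(p := j / N))\<bar>) \<in> borel_measurable m" if "j \<le> N" for j
  proof -
    have "(\<lambda>x. u (x(p := j / N))) \<in> borel_measurable OmegaB"
      using that N by (intro measurable_compose[OF fun_upd_measurable_OmegaB u_meas]) auto
    then show ?thesis using c_meas[of j] by (simp add: measurable_cong_sets[OF sets_m refl])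
  qed
  have "\<bar>bernstein_smoothing S L N p c x - u x\<bar> \<le> (\<Sum>j\<le>N. \<bar>c j x - u (x(p := j / N))\<bar>) + 2 * L * \<delta>"
    if x: "x \<in> Omega" for x
    using Bernstein_clamp_walk_approx[OF N \<delta> L, of "\<lambda>t. u (x(p := t))" S "x p" "\<lambda>j. c j x"]
      u_bound[OF fun_upd_in_Omega[OF x]] u_lip[OF x] x
    by (simp add: bernstein_smoothing_def mem_Omega_iff)
  then have "(\<integral>\<^sup>+x. ennreal \<bar>bernstein_smoothing S L N p c x - u x\<bar> \<partial>m)
      \<le> (\<integral>\<^sup>+x. (\<Sum>j\<le>N. ennreal \<bar>c j x - u (x(p := j / N))\<bar>) + ennreal (2 * L * \<delta>) \<partial>m)"
    using L \<delta> by (intro nn_integral_mono) (simp add: space_m ennreal_leI flip: ennreal_plus)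
  also have "\<dots> = (\<integral>\<^sup>+x. (\<Sum>j\<le>N. ennreal \<bar>c j x - u (x(p := j / N))\<bar>) \<partial>m)
      + (\<integral>\<^sup>+x. ennreal (2 * L * \<delta>) \<partial>m)"
    using slice_meas by (intro nn_integral_add borel_measurable_sum) auto
  also have "(\<integral>\<^sup>+x. (\<Sum>j\<le>N. ennreal \<bar>c j x - u (x(p := j / N))\<bar>) \<partial>m)
      = (\<Sum>j\<le>N. \<integral>\<^sup>+x. ennreal \<bar>c j x - u (x(p := j / N))\<bar> \<partial>m)"
    using slice_meas by (intro nn_integral_sum) auto
  finally show ?thesis by simp
qed

lemma nn_integral_bernstein_smoothing_le:
  fixes u :: "'d::finite config \<Rightarrow> real"
  assumes m: "finite_measure m" "sets m = sets OmegaB"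
    and N: "N > 0" and \<delta>: "\<delta> > 0" "1 \<le> real N * \<delta>\<^sup>2" and L: "0 \<le> L"
    and u_meas: "u \<in> borel_measurable OmegaB" and c_meas: "\<And>j. c j \<in> borel_measurable OmegaB"
    and u_bound: "\<And>x. x \<in> Omega \<Longrightarrow> \<bar>u x\<bar> \<le> S"
    and u_lip: "\<And>x t t'. x \<in> Omega \<Longrightarrow> t \<in> {0..1} \<Longrightarrow> t' \<in> {0..1} \<Longrightarrow>
                  \<bar>u (x(p := t)) - u (x(p := t'))\<bar> \<le> L * \<bar>t - t'\<bar>"
    and \<eta>: "0 \<le> \<eta>" and c_err: "\<And>j. j \<le> N \<Longrightarrow> (\<integral>\<^sup>+x. ennreal \<bar>c j x - u (x(p := j / N))\<bar> \<partial>m) \<le> ennreal \<eta>"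
  shows "(\<integral>\<^sup>+x. ennreal \<bar>bernstein_smoothing S L N p c x - u x\<bar> \<partial>m)
           \<le> ennreal ((\<Sum>j\<le>N. \<eta>) + 2 * L * \<delta> * measure m (space m))"
proof -
  have "(\<integral>\<^sup>+x. ennreal \<bar>bernstein_smoothing S L N p c x - u x\<bar> \<partial>m)
      \<le> (\<Sum>j\<le>N. \<integral>\<^sup>+x. ennreal \<bar>c j x - u (x(p := j / N))\<bar> \<partial>m)
        + ennreal (2 * L * \<delta>) * emeasure m (space m)"
    by (rule nn_integral_bernstein_smoothing_sub_le[OF m(2) N \<delta> L u_meas c_meas u_bound u_lip])
  also have "\<dots> \<le> (\<Sum>j\<le>N. ennreal \<eta>) + ennreal (2 * L * \<delta>) * ennreal (measure m (space m))"
    using c_err m(1) by (intro add_mono sum_mono) (simp_all add: finite_measure.emeasure_eq_measure)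
  also have "\<dots> = ennreal ((\<Sum>j\<le>N. \<eta>) + 2 * L * \<delta> * measure m (space m))"
    using \<eta> \<delta> L
    by (simp only: sum_ennreal ennreal_mult[symmetric] ennreal_plus[symmetric] measure_nonneg
        mult_nonneg_nonneg sum_nonneg zero_le_numeral less_imp_le mult.assoc)
  finally show ?thesis .
qed

lemma Bernstein_error_parameters:
  fixes e L Q :: real
  assumes e: "0 < e" and LQ: "0 \<le> L * Q"
  obtains N :: nat and \<delta> :: real where "0 < N" "0 < \<delta>" "1 \<le> real N * \<delta>\<^sup>2" "2 * L * \<delta> * Q \<le> e / 2"
proof -
  define \<delta> where "\<delta> = e / (4 * (L * Q + 1))"
  have \<delta>: "\<delta> > 0" using e LQ by (simp add: \<delta>_def)
  have "2 * L * \<delta> * Q = e / 2 * (L * Q / (L * Q + 1))" using LQ by (simp add: \<delta>_def field_simps)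
  also have "\<dots> \<le> e / 2" using e LQ by (intro mult_left_le) auto
  finally have \<delta>Q: "2 * L * \<delta> * Q \<le> e / 2" .
  obtain N :: nat where N_large: "1 / \<delta>\<^sup>2 < real N" using reals_Archimedean2 by blast
  have "N > 0" "1 \<le> real N * \<delta>\<^sup>2"
    using N_large \<delta> by (metis of_nat_0_less_iff order_less_trans zero_less_divide_1_iff zero_less_power)
      (use N_large \<delta> in \<open>simp add: field_simps\<close>)
  with \<delta> \<delta>Q that show ?thesis by blast
qed

lemma L1_approx_slices:
  fixes u :: "'d::finite config \<Rightarrow> real" and t :: "nat \<Rightarrow> real" and \<eta> :: real
  assumes ms: "finite ms" "\<And>m. m \<in> ms \<Longrightarrow> finite_measure m \<and> sets m = sets OmegaB"
    and u_meas: "u \<in> borel_measurable OmegaB" and u_bound: "\<And>x. x \<in> Omega \<Longrightarrow> \<bar>u x\<bar> \<le> S"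
    and u_F: "\<And>x y. x \<in> Omega \<Longrightarrow> y \<in> Omega \<Longrightarrow> \<forall>q\<in>F. x q = y q \<Longrightarrow> u x = u y"
    and t: "\<And>j. t j \<in> {0..1}" and "\<eta> > 0"
  obtains g where "\<And>j. continuous_on UNIV (g j)"
    "\<And>j m. m \<in> ms \<Longrightarrow> (\<integral>\<^sup>+x. ennreal \<bar>g j (proj_coords (F - {p}) x) - u (x(p := t j))\<bar> \<partial>m) < ennreal \<eta>"
proof -
  define P where "P j g \<longleftrightarrow> continuous_on UNIV g \<and>
    (\<forall>m\<in>ms. (\<integral>\<^sup>+x. ennreal \<bar>g (proj_coords (F - {p}) x) - u (x(p := t j))\<bar> \<partial>m) < ennreal \<eta>)" for j g
  have "\<exists>g. P j g" for j
  proof -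
    obtain g where "continuous_on UNIV g" "\<And>m. m \<in> ms \<Longrightarrow>
        (\<integral>\<^sup>+x. ennreal \<bar>g (proj_coords (F - {p}) x) - u (x(p := t j))\<bar> \<partial>m) < ennreal \<eta>"
    proof (rule L1_approx_by_continuous_of_coords[OF ms, of "\<lambda>x. u (x(p := t j))"])
      show "(\<lambda>x. u (x(p := t j))) \<in> borel_measurable OmegaB"
        by (rule measurable_compose[OF fun_upd_measurable_OmegaB[OF t] u_meas])
      show "bounded ((\<lambda>x. u (x(p := t j))) ` Omega)"
        by (rule boundedI[where B=S]) (auto intro: u_bound fun_upd_in_Omega[OF _ t])
      fix x :: "'d config" assume x: "x \<in> Omega"
      show "u ((proj_coords (F - {p}) x)(p := t j)) = u (x(p := t j))"
      proof (rule u_F)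
        show "(proj_coords (F - {p}) x)(p := t j) \<in> Omega" "x(p := t j) \<in> Omega"
          using x t by (simp_all add: fun_upd_in_Omega proj_coords_in_Omega)
        show "\<forall>q\<in>F. ((proj_coords (F - {p}) x)(p := t j)) q = (x(p := t j)) q"
          by (simp add: proj_coords_def)
      qed
    qed (use \<open>\<eta> > 0\<close> in auto)
    then show ?thesis unfolding P_def by blast
  qed
  then have "P j (SOME g. P j g)" for j by (rule someI_ex)
  then show ?thesis by (intro that[of "\<lambda>j. SOME g. P j g"]) (auto simp: P_def)
qed

lemma smooth_L1_approximation:
  fixes u :: "'d::finite config \<Rightarrow> real" and p :: "int^'d" and e :: real
  assumes ms: "finite ms" "\<And>m. m \<in> ms \<Longrightarrow> finite_measure m \<and> sets m = sets OmegaB"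
    and u_dep: "depends_finitely u" and u_meas: "u \<in> borel_measurable OmegaB"
    and u_bound: "\<And>x. x \<in> Omega \<Longrightarrow> \<bar>u x\<bar> \<le> S"
    and u_lip: "\<And>x t t'. x \<in> Omega \<Longrightarrow> t \<in> {0..1} \<Longrightarrow> t' \<in> {0..1} \<Longrightarrow>
                  \<bar>u (x(p := t)) - u (x(p := t'))\<bar> \<le> L * \<bar>t - t'\<bar>"
    and L: "0 \<le> L" and e: "0 < e"
  obtains W where "partially_C1 p W" "\<And>x. x \<in> Omega \<Longrightarrow> cmod (W x) \<le> S"
    "\<And>x. x \<in> Omega \<Longrightarrow> cmod (pderiv_at p W x) \<le> L"
    "\<And>m. m \<in> ms \<Longrightarrow> (\<integral>\<^sup>+x. ennreal (cmod (W x - u x)) \<partial>m) \<le> ennreal e"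
proof -
  obtain F where F: "finite F" and u_F: "\<forall>x\<in>Omega. \<forall>y\<in>Omega. (\<forall>q\<in>F. x q = y q) \<longrightarrow> u x = u y"
    using u_dep unfolding depends_finitely_def by blast
  have S: "0 \<le> S" using u_bound[OF zero_in_Omega] by linarith
  define Q where "Q = (\<Sum>m\<in>ms. measure m (space m))"
  have Q: "0 \<le> Q" "\<And>m. m \<in> ms \<Longrightarrow> measure m (space m) \<le> Q"
    unfolding Q_def using ms(1) by (auto intro: sum_nonneg member_le_sum)
  obtain N \<delta> where N: "N > 0" "1 \<le> real N * \<delta>\<^sup>2" and \<delta>: "\<delta> > 0" and \<delta>Q: "2 * L * \<delta> * Q \<le> e / 2"
    using Bernstein_error_parameters[OF e] L Q(1) by (metis zero_le_mult_iff)
  define \<eta> where "\<eta> = e / (2 * (N + 1))"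
  have \<eta>: "\<eta> > 0" "(\<Sum>j\<le>N. \<eta>) = e / 2" using e by (simp_all add: \<eta>_def field_simps add_pos_nonneg)
  obtain g :: "nat \<Rightarrow> 'd config \<Rightarrow> real" where g_cont: "\<And>j. continuous_on UNIV (g j)"
    and g_err: "\<And>j m. m \<in> ms \<Longrightarrow>
      (\<integral>\<^sup>+x. ennreal \<bar>g j (proj_coords (F - {p}) x) - u (x(p := min 1 (real j / N)))\<bar> \<partial>m) < ennreal \<eta>"
    by (rule L1_approx_slices[where t="\<lambda>j. min 1 (real j / N)" and p=p, OF ms u_meas u_bound u_F[rule_format] _ \<eta>(1)])
       auto
  define c where "c j x = g j (proj_coords (F - {p}) x)" for j x
  have c_F: "c j x = c j y" if "\<forall>q\<in>F - {p}. x q = y q" for j x y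
  proof -
    have "proj_coords (F - {p}) x = proj_coords (F - {p}) y" using that by (auto simp: proj_coords_def)
    then show ?thesis by (simp add: c_def)
  qed
  have c_cont: "continuous_on UNIV (c j)" for j
    unfolding c_def by (rule continuous_on_compose2[OF g_cont continuous_on_proj_coords]) auto
  have G: "finite (F - {p})" "p \<notin> F - {p}" using F by auto
  note smoothing = N(1) S L G c_F c_cont
  define W where "W x = complex_of_real (bernstein_smoothing S L N p c x)" for x
  show ?thesis
  proof (rule that)
    show "partially_C1 p W"
      unfolding W_def by (rule partially_C1_bernstein_smoothing[OF smoothing])
    show "cmod (W x) \<le> S" if "x \<in> Omega" for x
      unfolding W_def by (rule norm_bernstein_smoothing_le[OF smoothing that])
    show "cmod (pderiv_at p W x) \<le> L" if "x \<in> Omega" for x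
      unfolding W_def[abs_def]
      by (rule norm_pderiv_bernstein_smoothing_le[where c=c, OF smoothing that])
    fix m assume m: "m \<in> ms"
    have "(\<integral>\<^sup>+x. ennreal (cmod (W x - u x)) \<partial>m)
        = (\<integral>\<^sup>+x. ennreal \<bar>bernstein_smoothing S L N p c x - u x\<bar> \<partial>m)"
      by (simp add: W_def flip: of_real_diff)
    also have "\<dots> \<le> ennreal ((\<Sum>j\<le>N. \<eta>) + 2 * L * \<delta> * measure m (space m))"
    proof (rule nn_integral_bernstein_smoothing_le)
      fix j assume "j \<le> N"
      then have "min 1 (real j / N) = j / N" using N(1) by (simp add: min_def field_simps)
      then show "(\<integral>\<^sup>+x. ennreal \<bar>c j x - u (x(p := j / N))\<bar> \<partial>m) \<le> ennreal \<eta>"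
        using g_err[OF m, of j] by (simp add: c_def)
    qed (use ms(2)[OF m] N \<delta> L u_meas u_bound u_lip \<eta>(1)
          continuous_on_Omega_imp_measurable[OF continuous_on_subset[OF c_cont subset_UNIV]] in auto)
    also have "\<dots> \<le> ennreal e"
      using \<eta>(2) \<delta>Q Q(2)[OF m] mult_left_mono[OF Q(2)[OF m], of "2 * L * \<delta>"] L \<delta>
      by (intro ennreal_leI) simp
    finally show "(\<integral>\<^sup>+x. ennreal (cmod (W x - u x)) \<partial>m) \<le> ennreal e" .
  qed
qed

section \<open>Integration against the complex measure\<close>

lemma bounded_mult_comp:
  fixes f g :: "'a \<Rightarrow> 'b::real_normed_algebra"
  assumes "bounded (f ` S)" "bounded (g ` S)"
  shows "bounded ((\<lambda>x. f x * g x) ` S)"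
proof -
  obtain B C where B: "\<And>x. x \<in> S \<Longrightarrow> norm (f x) \<le> B" and C: "\<And>x. x \<in> S \<Longrightarrow> norm (g x) \<le> C"
    using assms by (auto simp: bounded_iff)
  have "norm (f x * g x) \<le> B * C" if "x \<in> S" for x
    using B[OF that] C[OF that]
    by (intro order.trans[OF norm_mult_ineq] mult_mono) (auto intro: order.trans[OF norm_ge_zero])
  then show ?thesis by (auto simp: bounded_iff)
qed

lemma integrable_cborel_component:
  assumes "is_cborel (m1, m2, m3, m4)" "m \<in> {m1, m2, m3, m4}"
    and "f \<in> borel_measurable OmegaB" "bounded (f ` Omega)"
  shows "integrable m (f :: 'd::finite config \<Rightarrow> complex)"
proof -
  have m: "finite_measure m" "sets m = sets OmegaB" using assms(1,2) by (auto simp: is_cborel_def)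
  obtain B where "\<And>x. x \<in> Omega \<Longrightarrow> cmod (f x) \<le> B" using assms(4) by (auto simp: bounded_iff)
  then show ?thesis
    using m assms(3) sets_eq_OmegaB_imp_space[OF m(2)]
    by (intro finite_measure.integrable_const_bound[where B=B]) (auto simp: measurable_cong_sets[OF m(2) refl])
qed

lemma cint_cong:
  assumes "is_cborel \<mu>" "\<And>x. x \<in> Omega \<Longrightarrow> f x = g x"
  shows "cint \<mu> f = cint \<mu> g"
proof -
  have "integral\<^sup>L m f = integral\<^sup>L m g" if "sets m = sets OmegaB" for m
    using assms(2) sets_eq_OmegaB_imp_space[OF that] by (intro Bochner_Integration.integral_cong) auto
  with assms(1) show ?thesis by (cases \<mu>) (simp add: cint_def is_cborel_def)
qed

lemma cint_scale: "cint \<mu> (\<lambda>x. c * f x) = c * cint \<mu> f"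
proof -
  obtain m1 m2 m3 m4 where "\<mu> = (m1, m2, m3, m4)" by (cases \<mu>)
  then show ?thesis
    unfolding cint_def by (simp add: right_diff_distrib distrib_left mult.left_commute[of \<i>])
qed

lemma cint_diff_add:
  fixes \<mu> :: "'d::finite cmeasure"
  assumes \<mu>: "is_cborel \<mu>"
    and "f \<in> borel_measurable OmegaB" "bounded (f ` Omega)"
    and "g \<in> borel_measurable OmegaB" "bounded (g ` Omega)"
    and "h \<in> borel_measurable OmegaB" "bounded (h ` Omega)"
  shows "cint \<mu> (\<lambda>x. f x - g x + h x) = cint \<mu> f - cint \<mu> g + cint \<mu> h"
proof (cases \<mu>)
  case (fields m1 m2 m3 m4)
  have "integrable m f \<and> integrable m g \<and> integrable m h" if "m \<in> {m1, m2, m3, m4}" for m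
    using \<mu>[unfolded fields] that assms(2-7) by (auto intro: integrable_cborel_component)
  then show ?thesis unfolding fields cint_def by (simp add: right_diff_distrib distrib_left)
qed

lemma norm_integral_le_nn_integral: "ennreal (norm (integral\<^sup>L M f)) \<le> (\<integral>\<^sup>+x. norm (f x) \<partial>M)"
  by (cases "integrable M f") (simp_all add: integral_norm_bound_ennreal not_integrable_integral_eq)

lemma norm_cint_le_nn_integral:
  assumes "\<And>m. m \<in> {m1, m2, m3, m4} \<Longrightarrow> (\<integral>\<^sup>+x. cmod (f x) \<partial>m) \<le> ennreal \<eta>" and "0 \<le> \<eta>"
  shows "cmod (cint (m1, m2, m3, m4) f) \<le> 4 * \<eta>"
proof -
  have "cmod (integral\<^sup>L m f) \<le> \<eta>" if "m \<in> {m1, m2, m3, m4}" for m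
    using order.trans[OF norm_integral_le_nn_integral assms(1)[OF that]] assms(2) by simp
  then have "cmod (integral\<^sup>L m1 f) \<le> \<eta>" "cmod (integral\<^sup>L m2 f) \<le> \<eta>"
    "cmod (integral\<^sup>L m3 f) \<le> \<eta>" "cmod (integral\<^sup>L m4 f) \<le> \<eta>"
    by simp_all
  moreover have "cmod (cint (m1, m2, m3, m4) f) \<le> cmod (integral\<^sup>L m1 f) + cmod (integral\<^sup>L m2 f)
      + cmod (integral\<^sup>L m3 f) + cmod (integral\<^sup>L m4 f)"
  proof -
    have "cmod (cint (m1, m2, m3, m4) f)
        \<le> cmod (integral\<^sup>L m1 f - integral\<^sup>L m2 f) + cmod (integral\<^sup>L m3 f - integral\<^sup>L m4 f)"
      unfolding cint_def
      using norm_triangle_ineq[of "integral\<^sup>L m1 f - integral\<^sup>L m2 f" "\<i> * (integral\<^sup>L m3 f - integral\<^sup>L m4 f)"]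
      by (simp add: norm_mult)
    also have "\<dots> \<le> cmod (integral\<^sup>L m1 f) + cmod (integral\<^sup>L m2 f) + (cmod (integral\<^sup>L m3 f)
        + cmod (integral\<^sup>L m4 f))"
      by (intro add_mono norm_triangle_ineq4)
    finally show ?thesis by simp
  qed
  ultimately show ?thesis by linarith
qed

lemma test_fun_zero: "test_fun p (\<lambda>_. 0)"
  by (simp add: test_fun_iff partially_C1_const)

lemma VarP_nonneg: "0 \<le> VarP p L"
  unfolding VarP_def using test_fun_zero by (intro SUP_upper2[of "\<lambda>_. 0"]) auto

lemma tvnorm_nonneg: "0 \<le> tvnorm \<mu>"
  unfolding tvnorm_def by (intro SUP_upper2[of "\<lambda>_. 0"]) auto

lemma tvnorm_finite:
  fixes \<mu> :: "'d::finite cmeasure"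
  assumes "is_cborel \<mu>"
  shows "tvnorm \<mu> < \<infinity>"
proof -
  obtain m1 m2 m3 m4 where \<mu>_eq: "\<mu> = (m1, m2, m3, m4)" by (cases \<mu>)
  define Q where "Q = (\<Sum>m\<in>{m1, m2, m3, m4}. measure m (space m))"
  have "cmod (cint \<mu> \<phi>) \<le> 4 * Q"
    if "\<phi> \<in> borel_measurable OmegaB" "\<forall>x\<in>Omega. cmod (\<phi> x) \<le> 1" for \<phi>
    unfolding \<mu>_eq
  proof (rule norm_cint_le_nn_integral)
    fix m assume m: "m \<in> {m1, m2, m3, m4}"
    then have fin: "finite_measure m" and sets: "sets m = sets OmegaB"
      using assms by (auto simp: \<mu>_eq is_cborel_def)
    have "(\<integral>\<^sup>+x. cmod (\<phi> x) \<partial>m) \<le> (\<integral>\<^sup>+x. 1 \<partial>m)"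
      using that sets_eq_OmegaB_imp_space[OF sets] by (intro nn_integral_mono) simp
    also have "\<dots> = ennreal (measure m (space m))"
      using fin by (simp add: finite_measure.emeasure_eq_measure)
    also have "\<dots> \<le> ennreal Q"
      unfolding Q_def using m by (intro ennreal_leI member_le_sum) auto
    finally show "(\<integral>\<^sup>+x. cmod (\<phi> x) \<partial>m) \<le> ennreal Q" .
  qed (simp add: Q_def sum_nonneg)
  then have "tvnorm \<mu> \<le> ereal (4 * Q)"
    unfolding tvnorm_def by (intro SUP_least) auto
  then show ?thesis using order.strict_trans1 by fastforce
qed

lemma le_mult_if_le_mult_gt:
  fixes x K v :: real
  assumes v: "0 \<le> v" and le: "\<And>K'. K < K' \<Longrightarrow> x \<le> K' * v"
  shows "x \<le> K * v"
proof (cases "v = 0")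
  case True
  then show ?thesis using le[of "K + 1"] by simp
next
  case False
  with v have v: "0 < v" by simp
  have "x / v \<le> K"
  proof (rule dense_ge)
    show "x / v \<le> y" if "K < y" for y using le[OF that] v by (simp add: pos_divide_le_eq)
  qed
  with v show ?thesis by (simp add: pos_divide_le_eq)
qed

lemma norm_cint_le_tvnorm:
  fixes \<mu> :: "'d::finite cmeasure"
  assumes \<mu>: "is_cborel \<mu>" and \<tau>: "tvnorm \<mu> \<le> ereal \<tau>"
    and f: "f \<in> borel_measurable OmegaB" and K: "\<And>x. x \<in> Omega \<Longrightarrow> cmod (f x) \<le> K"
  shows "cmod (cint \<mu> f) \<le> K * \<tau>"
proof (rule le_mult_if_le_mult_gt)
  show "0 \<le> \<tau>" using order.trans[OF tvnorm_nonneg \<tau>] by (simp add: zero_ereal_def)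
  fix K' assume "K < K'"
  then have K': "0 < K'" using order.trans[OF norm_ge_zero K[OF zero_in_Omega]] by linarith
  have "cmod (complex_of_real (1 / K') * f x) \<le> 1" if "x \<in> Omega" for x
    using K[OF that] \<open>K < K'\<close> K' by (simp add: norm_divide pos_divide_le_eq)
  then have "ereal (cmod (cint \<mu> (\<lambda>x. complex_of_real (1 / K') * f x))) \<le> tvnorm \<mu>"
    unfolding tvnorm_def using f by (intro SUP_upper) auto
  then have "ereal (cmod (complex_of_real (1 / K') * cint \<mu> f)) \<le> ereal \<tau>"
    unfolding cint_scale using \<tau> by (rule order.trans)
  then have "cmod (cint \<mu> f) / K' \<le> \<tau>"
    using K' by (simp add: norm_divide)
  then show "cmod (cint \<mu> f) \<le> K' * \<tau>" using K' by (simp add: field_simps)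
qed

lemma norm_cint_pderiv_le_VarP:
  fixes \<mu> :: "'d::finite cmeasure"
  assumes \<mu>: "is_cborel \<mu>" and v: "VarP p (cint \<mu>) \<le> ereal v"
    and \<psi>: "partially_C1 p \<psi>" and M: "\<And>x. x \<in> Omega \<Longrightarrow> cmod (\<psi> x) \<le> M"
  shows "cmod (cint \<mu> (pderiv_at p \<psi>)) \<le> M * v"
proof (rule le_mult_if_le_mult_gt)
  show "0 \<le> v" using order.trans[OF VarP_nonneg v] by (simp add: zero_ereal_def)
  fix M' assume "M < M'"
  then have M': "0 < M'" using order.trans[OF norm_ge_zero M[OF zero_in_Omega]] by linarith
  let ?\<phi> = "\<lambda>x. complex_of_real (1 / M') * \<psi> x"
  have "cmod (?\<phi> x) \<le> 1" if "x \<in> Omega" for x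
    using M[OF that] \<open>M < M'\<close> M' by (simp add: norm_divide pos_divide_le_eq)
  then have "test_fun p ?\<phi>"
    unfolding test_fun_iff using partially_C1_mult[OF partially_C1_const \<psi>] by blast
  then have "ereal (cmod (cint \<mu> (pderiv_at p ?\<phi>))) \<le> VarP p (cint \<mu>)"
    unfolding VarP_def by (intro SUP_upper) auto
  moreover have "cint \<mu> (pderiv_at p ?\<phi>) = cint \<mu> (\<lambda>x. complex_of_real (1 / M') * pderiv_at p \<psi> x)"
  proof (rule cint_cong[OF \<mu>])
    fix x :: "'d config" assume x: "x \<in> Omega"
    show "pderiv_at p ?\<phi> x = complex_of_real (1 / M') * pderiv_at p \<psi> x"
      using pderiv_at_mult[where f="\<lambda>_. complex_of_real (1 / M')", OF partially_C1_const \<psi> x]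
      by (simp only: pderiv_at_const[OF x] mult_zero_left add_0_right)
  qed
  then have "cint \<mu> (pderiv_at p ?\<phi>) = complex_of_real (1 / M') * cint \<mu> (pderiv_at p \<psi>)"
    by (simp only: cint_scale)
  ultimately have "ereal (cmod (complex_of_real (1 / M') * cint \<mu> (pderiv_at p \<psi>))) \<le> ereal v"
    using v by (metis order.trans)
  then have "cmod (cint \<mu> (pderiv_at p \<psi>)) / M' \<le> v"
    using M' by (simp add: norm_divide)
  then show "cmod (cint \<mu> (pderiv_at p \<psi>)) \<le> M' * v" using M' by (simp add: field_simps)
qed

section \<open>The estimate\<close>

lemma LipP_nonneg: "0 \<le> LipP p u"
proof -
  let ?x = "\<lambda>_. 0" and ?d = "u ((\<lambda>_. 0)(p := 0)) - u ((\<lambda>_. 0)(p := 1))"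
  have "ereal ?d \<le> LipP p u" "ereal (- ?d) \<le> LipP p u"
    unfolding LipP_def using zero_in_Omega
    by (intro SUP_upper2[of "(?x, 0, 1)"] SUP_upper2[of "(?x, 1, 0)"]; simp)+
  then show ?thesis by (cases "0 \<le> ?d") (auto intro: order.trans[rotated])
qed

lemma abs_diff_le_LipP:
  assumes "LipP p u \<le> ereal l" "x \<in> Omega" "t \<in> {0..1}" "t' \<in> {0..1}"
  shows "\<bar>u (x(p := t)) - u (x(p := t'))\<bar> \<le> l * \<bar>t - t'\<bar>"
proof (cases "t = t'")
  case False
  have q: "(u (x(p := a)) - u (x(p := b))) / \<bar>a - b\<bar> \<le> l" if "(a, b) \<in> {(t, t'), (t', t)}" for a b
  proof -
    have "ereal ((u (x(p := a)) - u (x(p := b))) / \<bar>a - b\<bar>) \<le> LipP p u"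
      unfolding LipP_def using assms(2-4) that False by (intro SUP_upper2[of "(x, a, b)"]) auto
    from order.trans[OF this assms(1)] show ?thesis by simp
  qed
  have "0 < \<bar>t - t'\<bar>" using False by simp
  then have "u (x(p := t)) - u (x(p := t')) \<le> l * \<bar>t - t'\<bar>" "u (x(p := t')) - u (x(p := t)) \<le> l * \<bar>t - t'\<bar>"
    using q[of t t'] q[of t' t] by (simp_all add: pos_divide_le_eq abs_minus_commute mult.commute)
  then show ?thesis by linarith
qed simp

lemma abs_le_supabs: "bounded (u ` Omega) \<Longrightarrow> x \<in> Omega \<Longrightarrow> \<bar>u x\<bar> \<le> supabs u"
  unfolding supabs_def
  by (intro cSUP_upper bounded_imp_bdd_above) (auto simp: bounded_iff intro!: exI)

lemma partially_C1_pderiv_bounded: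
  assumes "partially_C1 p \<phi>"
  obtains C where "0 \<le> C" "\<And>x. x \<in> Omega \<Longrightarrow> cmod (pderiv_at p \<phi> x) \<le> C"
  using continuous_on_compact_bound[OF compact_Omega] assms unfolding partially_C1_def by blast

lemma norm_cint_mult_le:
  fixes f g :: "'d::finite config \<Rightarrow> complex"
  assumes "is_cborel (m1, m2, m3, m4)" and f: "f \<in> borel_measurable OmegaB"
    and C: "0 \<le> C" "\<And>x. x \<in> Omega \<Longrightarrow> cmod (g x) \<le> C"
    and e: "0 \<le> e" "\<And>m. m \<in> {m1, m2, m3, m4} \<Longrightarrow> (\<integral>\<^sup>+x. cmod (f x) \<partial>m) \<le> ennreal e"
  shows "cmod (cint (m1, m2, m3, m4) (\<lambda>x. f x * g x)) \<le> 4 * (C * e)"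
proof (rule norm_cint_le_nn_integral)
  fix m assume m: "m \<in> {m1, m2, m3, m4}"
  then have sets: "sets m = sets OmegaB" using assms(1) by (auto simp: is_cborel_def)
  have "ennreal (cmod (f x * g x)) \<le> ennreal C * cmod (f x)" if "x \<in> Omega" for x
  proof -
    have "cmod (f x * g x) \<le> C * cmod (f x)"
      using mult_left_mono[OF C(2)[OF that] norm_ge_zero[of "f x"]] by (simp add: norm_mult mult.commute)
    then show ?thesis using C(1) by (simp add: ennreal_mult[symmetric] ennreal_leI)
  qed
  then have "(\<integral>\<^sup>+x. cmod (f x * g x) \<partial>m) \<le> (\<integral>\<^sup>+x. ennreal C * cmod (f x) \<partial>m)"
    using sets_eq_OmegaB_imp_space[OF sets] by (intro nn_integral_mono) simp
  also have "\<dots> = ennreal C * (\<integral>\<^sup>+x. cmod (f x) \<partial>m)"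
    using f by (intro nn_integral_cmult) (simp add: measurable_cong_sets[OF sets refl])
  also have "\<dots> \<le> ennreal C * ennreal e" by (intro mult_left_mono e(2)[OF m]) simp
  also have "\<dots> = ennreal (C * e)" using C e by (simp add: ennreal_mult)
  finally show "(\<integral>\<^sup>+x. cmod (f x * g x) \<partial>m) \<le> ennreal (C * e)" .
qed (use C e in simp)

lemma cint_mult_pderiv_eq:
  fixes \<mu> :: "'d::finite cmeasure" and u :: "'d config \<Rightarrow> real" and W \<phi> :: "'d config \<Rightarrow> complex"
  assumes \<mu>: "is_cborel \<mu>" and W: "partially_C1 p W" and \<phi>: "partially_C1 p \<phi>"
    and u: "u \<in> borel_measurable OmegaB" "bounded (u ` Omega)"
  shows "cint \<mu> (\<lambda>x. u x * pderiv_at p \<phi> x) = cint \<mu> (pderiv_at p (\<lambda>x. W x * \<phi> x))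
           - cint \<mu> (\<lambda>x. pderiv_at p W x * \<phi> x) + cint \<mu> (\<lambda>x. (u x - W x) * pderiv_at p \<phi> x)"
proof -
  have cont: "continuous_on Omega W" "continuous_on Omega (pderiv_at p \<phi>)"
    "continuous_on Omega (pderiv_at p (\<lambda>x. W x * \<phi> x))" "continuous_on Omega (\<lambda>x. pderiv_at p W x * \<phi> x)"
    using partially_C1_mult[OF W \<phi>] W \<phi> unfolding partially_C1_def by (auto intro!: continuous_intros)
  have "bounded ((\<lambda>x. complex_of_real (u x) - W x) ` Omega)"
    by (rule bounded_minus_comp[OF _ bounded_image_Omega_if_continuous[OF cont(1)]])
       (use u(2) in \<open>auto simp: bounded_iff\<close>)
  then have bounded: "bounded ((\<lambda>x. (u x - W x) * pderiv_at p \<phi> x) ` Omega)"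
    by (rule bounded_mult_comp[OF _ bounded_image_Omega_if_continuous[OF cont(2)]])
  have "cint \<mu> (\<lambda>x. u x * pderiv_at p \<phi> x) = cint \<mu> (\<lambda>x. pderiv_at p (\<lambda>x. W x * \<phi> x) x
      - pderiv_at p W x * \<phi> x + (u x - W x) * pderiv_at p \<phi> x)"
    by (rule cint_cong[OF \<mu>]) (simp add: pderiv_at_mult[OF W \<phi>] algebra_simps)
  also have "\<dots> = cint \<mu> (pderiv_at p (\<lambda>x. W x * \<phi> x))
      - cint \<mu> (\<lambda>x. pderiv_at p W x * \<phi> x) + cint \<mu> (\<lambda>x. (u x - W x) * pderiv_at p \<phi> x)"
    using cont u(1) bounded continuous_on_Omega_imp_measurable[OF cont(1)]
      continuous_on_Omega_imp_measurable[OF cont(2)]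
    by (intro cint_diff_add[OF \<mu>])
       (auto intro: continuous_on_Omega_imp_measurable bounded_image_Omega_if_continuous)
  finally show ?thesis .
qed

lemma norm_cint_mult_pderiv_le:
  fixes u :: "'d::finite config \<Rightarrow> real" and \<mu> :: "'d cmeasure"
  assumes \<mu>: "is_cborel \<mu>" and \<phi>: "test_fun p \<phi>"
    and u_dep: "depends_finitely u" and u_meas: "u \<in> borel_measurable OmegaB"
    and u_bound: "\<And>x. x \<in> Omega \<Longrightarrow> \<bar>u x\<bar> \<le> S"
    and u_lip: "\<And>x t t'. x \<in> Omega \<Longrightarrow> t \<in> {0..1} \<Longrightarrow> t' \<in> {0..1} \<Longrightarrow>
                  \<bar>u (x(p := t)) - u (x(p := t'))\<bar> \<le> l * \<bar>t - t'\<bar>"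
    and l: "0 \<le> l" and v: "VarP p (cint \<mu>) \<le> ereal v" and \<tau>: "tvnorm \<mu> \<le> ereal \<tau>"
  shows "cmod (cint \<mu> (\<lambda>x. u x * pderiv_at p \<phi> x)) \<le> S * v + l * \<tau>"
proof (rule field_le_epsilon)
  fix \<epsilon> :: real assume "0 < \<epsilon>"
  obtain m1 m2 m3 m4 where \<mu>_eq: "\<mu> = (m1, m2, m3, m4)" by (cases \<mu>)
  have ms: "finite {m1, m2, m3, m4}" "\<And>m. m \<in> {m1, m2, m3, m4} \<Longrightarrow> finite_measure m \<and> sets m = sets OmegaB"
    using \<mu> by (auto simp: \<mu>_eq is_cborel_def)
  have \<phi>1: "partially_C1 p \<phi>" and \<phi>_le: "\<And>x. x \<in> Omega \<Longrightarrow> cmod (\<phi> x) \<le> 1"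
    using \<phi> by (auto simp: test_fun_iff)
  obtain C where C: "0 \<le> C" "\<And>x. x \<in> Omega \<Longrightarrow> cmod (pderiv_at p \<phi> x) \<le> C"
    using partially_C1_pderiv_bounded[OF \<phi>1] by blast
  define e where "e = \<epsilon> / (4 * (C + 1))"
  have e: "0 < e" "4 * (C * e) \<le> \<epsilon>"
    using \<open>0 < \<epsilon>\<close> C(1) by (auto simp: e_def field_simps)
  obtain W where W: "partially_C1 p W" "\<And>x. x \<in> Omega \<Longrightarrow> cmod (W x) \<le> S"
      "\<And>x. x \<in> Omega \<Longrightarrow> cmod (pderiv_at p W x) \<le> l"
    and W_err: "\<And>m. m \<in> {m1, m2, m3, m4} \<Longrightarrow> (\<integral>\<^sup>+x. ennreal (cmod (W x - u x)) \<partial>m) \<le> ennreal e"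
    by (rule smooth_L1_approximation[OF ms u_dep u_meas u_bound u_lip l e(1)]) blast+
  have S: "0 \<le> S" using u_bound[OF zero_in_Omega] by linarith
  have u_bounded: "bounded (u ` Omega)" using u_bound by (intro boundedI) auto
  have "cmod (cint \<mu> (pderiv_at p (\<lambda>x. W x * \<phi> x))) \<le> S * v"
    using mult_mono[OF W(2) \<phi>_le] S
    by (intro norm_cint_pderiv_le_VarP[OF \<mu> v partially_C1_mult[OF W(1) \<phi>1]]) (simp add: norm_mult)
  moreover have "cmod (cint \<mu> (\<lambda>x. pderiv_at p W x * \<phi> x)) \<le> l * \<tau>"
    using mult_mono[OF W(3) \<phi>_le] l W(1) \<phi>1 unfolding partially_C1_def
    by (intro norm_cint_le_tvnorm[OF \<mu> \<tau>])
       (auto simp: norm_mult intro!: continuous_on_Omega_imp_measurable continuous_intros)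
  moreover have "W \<in> borel_measurable OmegaB"
    using W(1) unfolding partially_C1_def by (auto intro: continuous_on_Omega_imp_measurable)
  then have "(\<lambda>x. complex_of_real (u x) - W x) \<in> borel_measurable OmegaB" using u_meas by measurable
  then have "cmod (cint \<mu> (\<lambda>x. (u x - W x) * pderiv_at p \<phi> x)) \<le> 4 * (C * e)"
    using \<mu> C e(1) W_err unfolding \<mu>_eq by (intro norm_cint_mult_le) (auto simp: norm_minus_commute)
  moreover have "cmod (cint \<mu> (\<lambda>x. u x * pderiv_at p \<phi> x))
      \<le> cmod (cint \<mu> (pderiv_at p (\<lambda>x. W x * \<phi> x))) + cmod (cint \<mu> (\<lambda>x. pderiv_at p W x * \<phi> x))
        + cmod (cint \<mu> (\<lambda>x. (u x - W x) * pderiv_at p \<phi> x))"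
    unfolding cint_mult_pderiv_eq[OF \<mu> W(1) \<phi>1 u_meas u_bounded]
    by (rule order.trans[OF norm_triangle_ineq add_right_mono[OF norm_triangle_ineq4]])
  ultimately show "cmod (cint \<mu> (\<lambda>x. u x * pderiv_at p \<phi> x)) \<le> S * v + l * \<tau> + \<epsilon>"
    using e(2) by linarith
qed

text \<open>The crude bound settles the products \<open>0 \<cdot> \<infinity> = 0\<close> of extended reals.\<close>
lemma ereal_le_add_mult_if_real_bounds:
  fixes X S C \<tau> :: real and V L :: ereal
  assumes nonneg: "0 \<le> S" "0 \<le> C" "0 \<le> \<tau>" "0 \<le> V" "0 \<le> L"
    and crude: "X \<le> S * C * \<tau>"
    and finite: "\<And>v l. V = ereal v \<Longrightarrow> L = ereal l \<Longrightarrow> X \<le> S * v + l * \<tau>"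
  shows "ereal X \<le> ereal S * V + L * ereal \<tau>"
proof -
  have rhs_nonneg: "0 \<le> ereal S * V + L * ereal \<tau>" using nonneg by simp
  consider "S = 0 \<or> \<tau> = 0" | "0 < S" "0 < \<tau>" "V = \<infinity> \<or> L = \<infinity>" | v l where "V = ereal v" "L = ereal l"
    using nonneg by (cases V; cases L) force+
  then show ?thesis
  proof cases
    case 1
    then have "ereal X \<le> 0" using crude by auto
    then show ?thesis using rhs_nonneg by (rule order.trans)
  next
    case 2
    then have "ereal S * V + L * ereal \<tau> = \<infinity>" using nonneg by auto
    then show ?thesis by (metis ereal_less_eq(1))
  next
    case 3
    then show ?thesis using finite by simp
  qed
qed

lemma ereal_norm_cint_mult_pderiv_le:
  fixes u :: "'d::finite config \<Rightarrow> real" and \<mu> :: "'d cmeasure"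
  assumes \<mu>: "is_cborel \<mu>" and \<phi>: "test_fun p \<phi>"
    and u_dep: "depends_finitely u" and u_meas: "u \<in> borel_measurable OmegaB"
    and u_bounded: "bounded (u ` Omega)"
  shows "ereal (cmod (cint \<mu> (\<lambda>x. u x * pderiv_at p \<phi> x)))
           \<le> ereal (supabs u) * VarP p (cint \<mu>) + LipP p u * tvnorm \<mu>"
proof -
  have u_bound: "\<And>x. x \<in> Omega \<Longrightarrow> \<bar>u x\<bar> \<le> supabs u" by (rule abs_le_supabs[OF u_bounded])
  have S: "0 \<le> supabs u" using u_bound[OF zero_in_Omega] by linarith
  obtain \<tau> where \<tau>: "tvnorm \<mu> = ereal \<tau>" "0 \<le> \<tau>"
    using tvnorm_finite[OF \<mu>] tvnorm_nonneg[of \<mu>] by (cases "tvnorm \<mu>") auto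
  obtain C where C: "0 \<le> C" "\<And>x. x \<in> Omega \<Longrightarrow> cmod (pderiv_at p \<phi> x) \<le> C"
    using \<phi> by (auto simp: test_fun_iff elim: partially_C1_pderiv_bounded)
  show ?thesis
    unfolding \<tau>(1)
  proof (rule ereal_le_add_mult_if_real_bounds[OF S C(1) \<tau>(2) VarP_nonneg LipP_nonneg])
    have "continuous_on Omega (pderiv_at p \<phi>)" using \<phi> by (simp add: test_fun_def)
    then have "(\<lambda>x. u x * pderiv_at p \<phi> x) \<in> borel_measurable OmegaB"
      using u_meas continuous_on_Omega_imp_measurable by measurable
    then show "cmod (cint \<mu> (\<lambda>x. u x * pderiv_at p \<phi> x)) \<le> supabs u * C * \<tau>"
      using u_bound C(2) S by (intro norm_cint_le_tvnorm[OF \<mu>]) (auto simp: \<tau> norm_mult intro: mult_mono)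
  next
    fix v l assume "VarP p (cint \<mu>) = ereal v" "LipP p u = ereal l"
    then show "cmod (cint \<mu> (\<lambda>x. u x * pderiv_at p \<phi> x)) \<le> supabs u * v + l * \<tau>"
      using abs_diff_le_LipP[of p u l] LipP_nonneg[of p u] \<tau>(1)
      by (intro norm_cint_mult_pderiv_le[OF \<mu> \<phi> u_dep u_meas u_bound]) auto
  qed
qed

theorem lemma2p5:
  fixes u :: "('d::finite) config \<Rightarrow> real" and \<mu> :: "'d cmeasure" and p :: "int^'d"
  assumes "depends_finitely u"
    and "u \<in> borel_measurable OmegaB"
    and "bounded (u ` Omega)"
    and "is_cborel \<mu>"
    and "VarT (cint \<mu>) < \<infinity>"
  shows "VarP p (dens u \<mu>) \<le> ereal (supabs u) * VarP p (cint \<mu>) + LipP p u * tvnorm \<mu>"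
  unfolding VarP_def[of p "dens u \<mu>"] dens_def
  using ereal_norm_cint_mult_pderiv_le[OF assms(4) _ assms(1-3)] by (auto intro: SUP_least)

end
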